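(* Let $\Lambda$ be a quantum channel (completely positive trace-preserving map) from $B(\mathbb{C}^d)$ to $B(\mathbb{C}^{d'})$, and let $\varrho(\Lambda)=(\mathrm{id}\otimes\Lambda)(P_+)$ be the state isomorphic to it, where $P_+=|\Psi_+\rangle\langle\Psi_+|$, $|\Psi_+\rangle=\frac{1}{\sqrt d}\sum_{i=1}^d|ii\rangle$. If $\varrho(\Lambda)$ is symmetrically extendible, then the one-way quantum capacity $Q_{\rightarrow}(\Lambda)$ of $\Lambda$ is zero.
   Context: A state $\rho_{AB}$ on $\mathcal{H}_A\otimes\mathcal{H}_B$ is called symmetrically extendible if there is a state $\rho_{ABB'}$ on $\mathcal{H}_A\otimes\mathcal{H}_B\otimes\mathcal{H}_{B'}$, with $\mathcal{H}_{B'}\cong\mathcal{H}_B$, such that $\rho_{ABB'}$ is invariant under the swap of $B$ and $B'$ and $\mathrm{Tr}_{B'}\rho_{ABB'}=\rho_{AB}$. $Q_{\rightarrow}(\Lambda)$ denotes the quantum capacity of $\Lambda$ when the sender and receiver are additionally allowed unlimited forward classical communication from sender to receiver. *)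

theory Defs
  imports Complex_Main "HOL-Library.Extended_Real" "Jordan_Normal_Form.Matrix"
begin

text \<open>Tensor product indices: for a system of dimensions d1 (first factor) and
  d2 (second factor), the pair (i,k) corresponds to the index i*d2+k.\<close>

definition mtrace :: "complex mat \<Rightarrow> complex" where
  "mtrace A = (\<Sum>i<dim_row A. A $$ (i,i))"

definition psd :: "nat \<Rightarrow> complex mat \<Rightarrow> bool" where
  "psd n A \<longleftrightarrow> A \<in> carrier_mat n n \<and>
     (\<forall>v :: nat \<Rightarrow> complex.
        Im (\<Sum>i<n. \<Sum>j<n. cnj (v i) * A $$ (i,j) * v j) = 0 \<and>
        Re (\<Sum>i<n. \<Sum>j<n. cnj (v i) * A $$ (i,j) * v j) \<ge> 0)"

definition density :: "nat \<Rightarrow> complex mat \<Rightarrow> bool" where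
  "density n \<rho> \<longleftrightarrow> psd n \<rho> \<and> mtrace \<rho> = 1"

definition munit :: "nat \<Rightarrow> nat \<Rightarrow> nat \<Rightarrow> complex mat" where
  "munit d i j = mat d d (\<lambda>(a,b). if a = i \<and> b = j then 1 else 0)"

definition kron :: "complex mat \<Rightarrow> complex mat \<Rightarrow> complex mat" where
  "kron A B = mat (dim_row A * dim_row B) (dim_col A * dim_col B)
     (\<lambda>(i,j). A $$ (i div dim_row B, j div dim_col B) * B $$ (i mod dim_row B, j mod dim_col B))"

text \<open>Tensor product of linear maps, defined by linear extension from matrix units:
  Phi1 : B(C^d1) -> B(C^e1), Phi2 : B(C^d2) -> B(C^e2).\<close>
definition tensor_map ::
  "(complex mat \<Rightarrow> complex mat) \<Rightarrow> nat \<Rightarrow> nat \<Rightarrow>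
   (complex mat \<Rightarrow> complex mat) \<Rightarrow> nat \<Rightarrow> nat \<Rightarrow> complex mat \<Rightarrow> complex mat" where
  "tensor_map \<Phi>1 d1 e1 \<Phi>2 d2 e2 M = mat (e1*e2) (e1*e2) (\<lambda>(r,c).
      \<Sum>i<d1. \<Sum>j<d1. \<Sum>k<d2. \<Sum>l<d2.
        M $$ (i*d2+k, j*d2+l) * (kron (\<Phi>1 (munit d1 i j)) (\<Phi>2 (munit d2 k l))) $$ (r,c))"

definition lin_map :: "nat \<Rightarrow> (complex mat \<Rightarrow> complex mat) \<Rightarrow> bool" where
  "lin_map din \<Phi> \<longleftrightarrow> (\<forall>A \<in> carrier_mat din din. \<forall>B \<in> carrier_mat din din. \<forall>a::complex.
      \<Phi> (A + B) = \<Phi> A + \<Phi> B \<and> \<Phi> (a \<cdot>\<^sub>m A) = a \<cdot>\<^sub>m \<Phi> A)"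

definition cp_map :: "nat \<Rightarrow> nat \<Rightarrow> (complex mat \<Rightarrow> complex mat) \<Rightarrow> bool" where
  "cp_map din dout \<Phi> \<longleftrightarrow> lin_map din \<Phi> \<and>
     (\<forall>A \<in> carrier_mat din din. \<Phi> A \<in> carrier_mat dout dout) \<and>
     (\<forall>m M. psd (m*din) M \<longrightarrow> psd (m*dout) (tensor_map (\<lambda>X. X) m m \<Phi> din dout M))"

definition tp_map :: "nat \<Rightarrow> (complex mat \<Rightarrow> complex mat) \<Rightarrow> bool" where
  "tp_map din \<Phi> \<longleftrightarrow> (\<forall>A \<in> carrier_mat din din. mtrace (\<Phi> A) = mtrace A)"

definition channel :: "nat \<Rightarrow> nat \<Rightarrow> (complex mat \<Rightarrow> complex mat) \<Rightarrow> bool" where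
  "channel din dout \<Phi> \<longleftrightarrow> cp_map din dout \<Phi> \<and> tp_map din \<Phi>"

primrec tensor_pow ::
  "(complex mat \<Rightarrow> complex mat) \<Rightarrow> nat \<Rightarrow> nat \<Rightarrow> nat \<Rightarrow> complex mat \<Rightarrow> complex mat" where
  "tensor_pow \<Phi> din dout 0 = (\<lambda>M. M)"
| "tensor_pow \<Phi> din dout (Suc n) =
     tensor_map \<Phi> din dout (tensor_pow \<Phi> din dout n) (din^n) (dout^n)"

definition Pplus :: "nat \<Rightarrow> complex mat" where
  "Pplus d = mat (d*d) (d*d) (\<lambda>(r,c).
     if r div d = r mod d \<and> c div d = c mod d then 1 / of_nat d else 0)"

definition choi :: "nat \<Rightarrow> nat \<Rightarrow> (complex mat \<Rightarrow> complex mat) \<Rightarrow> complex mat" where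
  "choi d d' \<Lambda> = tensor_map (\<lambda>X. X) d d \<Lambda> d d' (Pplus d)"

definition ptrace_last :: "nat \<Rightarrow> nat \<Rightarrow> complex mat \<Rightarrow> complex mat" where
  "ptrace_last da db M = mat da da (\<lambda>(i,j). \<Sum>k<db. M $$ (i*db+k, j*db+k))"

text \<open>Symmetric extendibility of a state on C^dA (x) C^dB: there is a state on
  C^dA (x) C^dB (x) C^dB invariant under swapping the last two factors
  (stated entrywise) whose partial trace over the last factor is rho.\<close>
definition sym_extendible :: "nat \<Rightarrow> nat \<Rightarrow> complex mat \<Rightarrow> bool" where
  "sym_extendible dA dB \<rho> \<longleftrightarrow> density (dA*dB) \<rho> \<and>
     (\<exists>\<sigma>. density (dA*dB*dB) \<sigma> \<and>
        (\<forall>a b b' c e e'. a < dA \<longrightarrow> b < dB \<longrightarrow> b' < dB \<longrightarrow> c < dA \<longrightarrow> e < dB \<longrightarrow> e' < dB \<longrightarrow>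
           \<sigma> $$ ((a*dB+b)*dB+b', (c*dB+e)*dB+e') = \<sigma> $$ ((a*dB+b')*dB+b, (c*dB+e')*dB+e)) \<and>
        ptrace_last (dA*dB) dB \<sigma> = \<rho>)"

text \<open>Entanglement fidelity <Phi_K| X |Phi_K> with the maximally entangled state of C^K (x) C^K.\<close>
definition ent_fid :: "nat \<Rightarrow> complex mat \<Rightarrow> real" where
  "ent_fid K X = Re ((1 / of_nat K) * (\<Sum>i<K. \<Sum>j<K. X $$ (i*K+i, j*K+j)))"

text \<open>A one-way (forward classical communication assisted) protocol for sending a
  K-dimensional quantum system through n uses of Lambda: the sender applies an instrument
  (CP maps Es ! x, summing to a trace-preserving map) from B(C^K) to the n channel inputs,
  sends the outcome x classically, and the receiver applies the channel Ds ! x from the n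
  channel outputs to B(C^K).\<close>
definition oneway_protocol ::
  "nat \<Rightarrow> nat \<Rightarrow> nat \<Rightarrow> nat \<Rightarrow> (complex mat \<Rightarrow> complex mat) list \<Rightarrow> (complex mat \<Rightarrow> complex mat) list \<Rightarrow> bool" where
  "oneway_protocol d d' n K Es Ds \<longleftrightarrow> length Ds = length Es \<and>
     (\<forall>x < length Es. cp_map K (d^n) (Es ! x)) \<and>
     (\<forall>A \<in> carrier_mat K K. (\<Sum>x<length Es. mtrace ((Es ! x) A)) = mtrace A) \<and>
     (\<forall>x < length Ds. channel (d'^n) K (Ds ! x))"

definition protocol_fid ::
  "nat \<Rightarrow> nat \<Rightarrow> (complex mat \<Rightarrow> complex mat) \<Rightarrow> nat \<Rightarrow> nat \<Rightarrow>
   (complex mat \<Rightarrow> complex mat) list \<Rightarrow> (complex mat \<Rightarrow> complex mat) list \<Rightarrow> real" where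
  "protocol_fid d d' \<Lambda> n K Es Ds = (\<Sum>x<length Es.
     ent_fid K (tensor_map (\<lambda>X. X) K K
        (\<lambda>M. (Ds ! x) (tensor_pow \<Lambda> d d' n ((Es ! x) M))) K K (Pplus K)))"

definition oneway_achievable :: "nat \<Rightarrow> nat \<Rightarrow> (complex mat \<Rightarrow> complex mat) \<Rightarrow> real \<Rightarrow> bool" where
  "oneway_achievable d d' \<Lambda> R \<longleftrightarrow>
     (\<forall>\<epsilon>>0. \<forall>\<delta>>0. \<exists>N. \<forall>n\<ge>N. \<exists>K Es Ds. K \<ge> 1 \<and>
        log 2 (real K) \<ge> real n * (R - \<delta>) \<and>
        oneway_protocol d d' n K Es Ds \<and>
        protocol_fid d d' \<Lambda> n K Es Ds \<ge> 1 - \<epsilon>)"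

definition Q_oneway :: "nat \<Rightarrow> nat \<Rightarrow> (complex mat \<Rightarrow> complex mat) \<Rightarrow> ereal" where
  "Q_oneway d d' \<Lambda> = Sup (ereal ` {R. 0 \<le> R \<and> oneway_achievable d d' \<Lambda> R})"

end

(*
  A symmetric extension \<sigma> of the Choi state of \<Lambda> is, up to normalisation, the Choi matrix of a
  completely positive map T from the input to two copies of the output, each copy seeing \<Lambda>.
  For a one-way protocol with branches (E, D) (the classical message selects the decoder), the
  map (D \<otimes> D) \<circ> T^n \<circ> E sends C^K to two copies of C^K, and both of its marginals equal the
  branch map D \<circ> \<Lambda>^n \<circ> E.  The Kraus vectors of such a symmetric "cloning" map satisfy a
  Cauchy-Schwarz estimate showing that the entanglement fidelity of the branch, summed over
  branches, is at most 3/4 as soon as K \<ge> 4.  A positive rate would give K \<ge> 4 with fidelity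
  close to 1 for large n, so only the rate 0, achieved by sending nothing, is achievable.

  Maps are handled through their kernels \<Phi>(|i><j|)_{b c} on matrix units, and complete
  positivity through Gram (Kraus) factorisations of these kernels.
*)

theory Submission
  imports Defs "HOL-Analysis.Convex"
begin

lemma pair_index_less: "x < m \<Longrightarrow> k < d \<Longrightarrow> x * d + k < m * (d::nat)"
proof -
  assume "x < m" "k < d"
  then have "x * d + k < (x + 1) * d" by simp
  also have "\<dots> \<le> m * d" using \<open>x < m\<close> by (intro mult_le_mono1) simp
  finally show ?thesis .
qed

lemma mod_less_of_less_mult: "r < m * (d::nat) \<Longrightarrow> r mod d < d"
  by (metis mod_less_divisor mult_0_right neq0_conv not_less0)

lemma sum_lessThan_mult: "(\<Sum>I<a * b. f I) = (\<Sum>i<a. \<Sum>k<(b::nat). f (i * b + k))"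
proof -
  have "(\<Sum>I<a * b. f I) = (\<Sum>i<a. sum f {i * b..<i * b + b})" by (simp add: sum.nat_group)
  also have "\<dots> = (\<Sum>i<a. \<Sum>k<b. f (i * b + k))"
  proof (rule sum.cong[OF refl])
    fix i
    have "sum f {0 + i * b..<b + i * b} = sum (\<lambda>k. f (k + i * b)) {0..<b}"
      by (rule sum.shift_bounds_nat_ivl)
    then show "sum f {i * b..<i * b + b} = (\<Sum>k<b. f (i * b + k))"
      by (simp add: atLeast0LessThan add.commute)
  qed
  finally show ?thesis .
qed

lemma sum_lessThan_mult2:
  "(\<Sum>I<a * b. \<Sum>J<a * b. f I J) = (\<Sum>i<a. \<Sum>j<a. \<Sum>k<(b::nat). \<Sum>l<b. f (i * b + k) (j * b + l))"
proof -
  have "(\<Sum>I<a * b. \<Sum>J<a * b. f I J) = (\<Sum>i<a. \<Sum>k<b. \<Sum>j<a. \<Sum>l<b. f (i * b + k) (j * b + l))"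
    by (simp add: sum_lessThan_mult)
  also have "\<dots> = (\<Sum>i<a. \<Sum>j<a. \<Sum>k<b. \<Sum>l<b. f (i * b + k) (j * b + l))"
    by (rule sum.cong[OF refl]) (rule sum.swap)
  finally show ?thesis .
qed

lemma sum_delta2:
  fixes f :: "nat \<Rightarrow> nat \<Rightarrow> 'a::comm_ring_1"
  assumes "a < n" "b < m"
  shows "(\<Sum>k<n. \<Sum>l<m. (if k = a \<and> l = b then 1 else 0) * f k l) = f a b"
proof -
  have "(\<Sum>l<m. (if k = a \<and> l = b then 1 else 0) * f k l) = (if k = a then f k b else 0)" for k
  proof -
    have "(\<Sum>l<m. (if k = a \<and> l = b then 1 else 0) * f k l) = (\<Sum>l<m. if k = a \<and> l = b then f k l else 0)"
      by (intro sum.cong) auto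
    then show ?thesis using assms(2) by (simp add: sum.If_cases)
  qed
  then show ?thesis using assms(1) by simp
qed

lemma sum_rotate3: "(\<Sum>x\<in>A. \<Sum>y\<in>B. \<Sum>z\<in>C. f x y z) = (\<Sum>y\<in>B. \<Sum>z\<in>C. \<Sum>x\<in>A. f x y z)"
  by (simp add: sum.swap[of _ A])

lemma sum_swap_pairs:
  "(\<Sum>x\<in>A. \<Sum>y\<in>B. \<Sum>z\<in>C. \<Sum>w\<in>D. f x y z w) = (\<Sum>z\<in>C. \<Sum>w\<in>D. \<Sum>x\<in>A. \<Sum>y\<in>B. f x y z w)"
proof -
  have "(\<Sum>y\<in>B. \<Sum>z\<in>C. \<Sum>w\<in>D. f x y z w) = (\<Sum>z\<in>C. \<Sum>w\<in>D. \<Sum>y\<in>B. f x y z w)" for x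
    by (rule sum_rotate3)
  then have "(\<Sum>x\<in>A. \<Sum>y\<in>B. \<Sum>z\<in>C. \<Sum>w\<in>D. f x y z w) = (\<Sum>x\<in>A. \<Sum>z\<in>C. \<Sum>w\<in>D. \<Sum>y\<in>B. f x y z w)"
    by simp
  also have "\<dots> = (\<Sum>z\<in>C. \<Sum>w\<in>D. \<Sum>x\<in>A. \<Sum>y\<in>B. f x y z w)"
    by (rule sum_rotate3)
  finally show ?thesis .
qed

section \<open>Positive semidefinite kernels\<close>

definition quad_form :: "nat \<Rightarrow> (nat \<Rightarrow> nat \<Rightarrow> complex) \<Rightarrow> (nat \<Rightarrow> complex) \<Rightarrow> complex" where
  "quad_form n A v = (\<Sum>i<n. \<Sum>j<n. cnj (v i) * A i j * v j)"

definition psd_kernel :: "nat \<Rightarrow> (nat \<Rightarrow> nat \<Rightarrow> complex) \<Rightarrow> bool" where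
  "psd_kernel n A \<longleftrightarrow> (\<forall>v. 0 \<le> quad_form n A v)"

lemma psd_iff_psd_kernel: "psd n A \<longleftrightarrow> A \<in> carrier_mat n n \<and> psd_kernel n (\<lambda>i j. A $$ (i,j))"
  unfolding psd_def psd_kernel_def quad_form_def by (auto simp: less_eq_complex_def)

lemma quad_form_cong: "(\<And>k. k < n \<Longrightarrow> v k = w k) \<Longrightarrow> quad_form n A v = quad_form n A w"
  unfolding quad_form_def by (intro sum.cong) auto

lemma psd_kernel_cong:
  assumes "\<And>i j. i < n \<Longrightarrow> j < n \<Longrightarrow> A i j = B i j" and "psd_kernel n A"
  shows "psd_kernel n B"
proof -
  have "quad_form n B v = quad_form n A v" for v
    unfolding quad_form_def using assms(1) by (intro sum.cong refl) simp
  then show ?thesis using assms(2) unfolding psd_kernel_def by simp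
qed

lemma quad_form_Suc:
  "quad_form (Suc n) A w = quad_form n A w + (\<Sum>i<n. cnj (w i) * A i n) * w n
     + cnj (w n) * (\<Sum>j<n. A n j * w j) + cnj (w n) * A n n * w n"
  by (simp add: quad_form_def sum.distrib sum_distrib_left sum_distrib_right algebra_simps)

lemma quad_form_single:
  assumes "p < n"
  shows "quad_form n A (\<lambda>k. if k = p then a else 0) = cnj a * A p p * a"
proof -
  have "(\<Sum>j<n. cnj (if i = p then a else 0) * A i j * (if j = p then a else 0))
      = (if i = p then cnj a * A p p * a else 0)" for i
  proof -
    have "(\<Sum>j<n. cnj (if i = p then a else 0) * A i j * (if j = p then a else 0))
        = (\<Sum>j<n. if j = p then cnj (if i = p then a else 0) * A i j * a else 0)"
      by (rule sum.cong) auto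
    then show ?thesis using assms by simp
  qed
  then show ?thesis unfolding quad_form_def using assms by simp
qed

lemma quad_form_pair:
  assumes "p < n" "q < n" "p \<noteq> q"
  shows "quad_form n A (\<lambda>k. (if k = p then a else 0) + (if k = q then b else 0)) =
    cnj a * A p p * a + cnj a * A p q * b + cnj b * A q p * a + cnj b * A q q * b"
proof -
  let ?v = "\<lambda>k. (if k = p then a else 0) + (if k = q then b else 0)"
  have row: "(\<Sum>j<n. A i j * ?v j) = A i p * a + A i q * b" for i
  proof -
    have "(\<Sum>j<n. A i j * ?v j) = (\<Sum>j<n. (if j = p then A i j * a else 0) + (if j = q then A i j * b else 0))"
      by (rule sum.cong) (auto simp: distrib_left)
    then show ?thesis using assms by (simp add: sum.distrib)
  qed
  have "quad_form n A ?v = (\<Sum>i<n. cnj (?v i) * (A i p * a + A i q * b))"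
    unfolding quad_form_def by (simp add: mult.assoc flip: sum_distrib_left row)
  also have "\<dots> = (\<Sum>i<n. (if i = p then cnj a * (A i p * a + A i q * b) else 0)
      + (if i = q then cnj b * (A i p * a + A i q * b) else 0))"
    by (rule sum.cong) (auto simp: distrib_right)
  also have "\<dots> = cnj a * (A p p * a + A p q * b) + cnj b * (A q p * a + A q q * b)"
    using assms by (simp add: sum.distrib)
  finally show ?thesis by (simp add: algebra_simps)
qed

lemma quad_form_slice:
  assumes "k < N"
  shows "quad_form (m * N) A (\<lambda>I. if I mod N = k then v (I div N) else 0)
    = (\<Sum>i<m. \<Sum>j<m. cnj (v i) * A (i * N + k) (j * N + k) * v j)"
proof -
  have "quad_form (m * N) A (\<lambda>I. if I mod N = k then v (I div N) else 0)
      = (\<Sum>i<m. \<Sum>j<m. \<Sum>k'<N. \<Sum>l'<N.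
        (if k' = k \<and> l' = k then 1 else 0) * (cnj (v i) * A (i * N + k') (j * N + l') * v j))"
    unfolding quad_form_def sum_lessThan_mult2 by (intro sum.cong refl) auto
  then show ?thesis using assms by (simp add: sum_delta2)
qed

lemma psd_kernel_diag_nonneg: "psd_kernel n A \<Longrightarrow> p < n \<Longrightarrow> 0 \<le> A p p"
  using quad_form_single[of p n A 1] unfolding psd_kernel_def
  by (metis complex_cnj_one mult_1 mult.right_neutral)

lemma psd_kernel_hermitian:
  assumes "psd_kernel n A" "p < n" "q < n"
  shows "A q p = cnj (A p q)"
proof (cases "p = q")
  case True
  then show ?thesis
    using psd_kernel_diag_nonneg[OF assms(1,2)] by (simp add: less_eq_complex_def complex_eq_iff)
next
  case False
  have real_diag: "Im (A p p) = 0" "Im (A q q) = 0"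
    using psd_kernel_diag_nonneg[OF assms(1,2)] psd_kernel_diag_nonneg[OF assms(1,3)]
    by (auto simp: less_eq_complex_def)
  have "0 \<le> quad_form n A (\<lambda>k. (if k = p then 1 else 0) + (if k = q then 1 else 0))"
    "0 \<le> quad_form n A (\<lambda>k. (if k = p then 1 else 0) + (if k = q then \<i> else 0))"
    using assms(1) unfolding psd_kernel_def by blast+
  then have "Im (A p q + A q p) = 0" "Re (A p q - A q p) = 0"
    unfolding quad_form_pair[OF assms(2,3) False] using real_diag by (simp_all add: less_eq_complex_def)
  then show ?thesis by (simp add: complex_eq_iff)
qed

lemma psd_kernel_SucD:
  assumes "psd_kernel (Suc n) A"
  shows "psd_kernel n A"
  unfolding psd_kernel_def
proof
  fix v :: "nat \<Rightarrow> complex"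
  let ?w = "\<lambda>k. if k < n then v k else 0"
  have "quad_form n A v = quad_form (Suc n) A ?w"
    by (simp add: quad_form_Suc quad_form_cong[of n ?w v])
  then show "0 \<le> quad_form n A v" using assms unfolding psd_kernel_def by simp
qed

lemma psd_kernel_zero_diag_row:
  assumes "psd_kernel n A" "p < n" "A p p = 0" "c < n"
  shows "A p c = 0"
proof (rule ccontr)
  assume ne: "A p c \<noteq> 0"
  then have pc: "p \<noteq> c" using assms(3) by auto
  have herm: "A c p = cnj (A p c)" using psd_kernel_hermitian[OF assms(1,2,4)] .
  \<comment> \<open>the test vector \<open>s e\<^sub>p + e\<^sub>c\<close> with \<open>s = -x A p c\<close> makes the form negative for large \<open>x\<close>\<close>
  define x where "x = (Re (A c c) + 1) / (2 * (cmod (A p c))^2)"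
  have pos: "(cmod (A p c))^2 > 0" using ne by simp
  let ?s = "- complex_of_real x * A p c"
  have "0 \<le> quad_form n A (\<lambda>k. (if k = p then ?s else 0) + (if k = c then 1 else 0))"
    using assms(1) unfolding psd_kernel_def by blast
  then have "0 \<le> Re (cnj ?s * A p p * ?s + cnj ?s * A p c + A c p * ?s + A c c)"
    unfolding quad_form_pair[OF assms(2,4) pc] by (simp add: less_eq_complex_def)
  also have "\<dots> = Re (A c c) - 2 * x * (cmod (A p c))^2"
    using assms(3) herm cmod_power2[of "A p c"] by (simp add: algebra_simps power2_eq_square)
  also have "\<dots> = -1" using pos unfolding x_def by (simp add: field_simps)
  finally show False by simp
qed

text \<open>For \<open>A n n = 0\<close> the Schur complement below is just the restriction of \<open>A\<close>, since \<open>x / 0 = 0\<close>.\<close>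

lemma psd_kernel_schur_complement:
  assumes "psd_kernel (Suc n) A"
  shows "psd_kernel n (\<lambda>r c. A r c - A r n * A n c / A n n)"
proof (cases "A n n = 0")
  case True
  then show ?thesis using psd_kernel_SucD[OF assms] by simp
next
  case False
  show ?thesis
    unfolding psd_kernel_def
  proof
    fix v
    define s where "s = (\<Sum>j<n. A n j * v j)"
    define w where "w k = (if k < n then v k else - s / A n n)" for k
    have "quad_form n (\<lambda>r c. A r c - A r n * A n c / A n n) v
        = quad_form n A v - (\<Sum>i<n. cnj (v i) * A i n) * s / A n n"
      unfolding quad_form_def s_def
      by (simp add: sum_subtractf sum_distrib_left sum_distrib_right sum_divide_distrib algebra_simps)
    also have "\<dots> = quad_form (Suc n) A w"
      unfolding quad_form_Suc using quad_form_cong[of n w v A] False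
      by (simp add: w_def s_def algebra_simps)
    finally show "0 \<le> quad_form n (\<lambda>r c. A r c - A r n * A n c / A n n) v"
      using assms unfolding psd_kernel_def by metis
  qed
qed

lemma psd_kernel_last_row:
  assumes "psd_kernel (Suc n) A" "r < Suc n" "c < Suc n" "r = n \<or> c = n"
  shows "A r c = A r n * A n c / A n n"
proof (cases "A n n = 0")
  case True
  have "A n c = 0" "A r n = 0"
    using psd_kernel_zero_diag_row[OF assms(1) _ True] psd_kernel_hermitian[OF assms(1) lessI assms(2)]
      assms(2,3)
    by auto
  then show ?thesis using assms(4) by auto
qed (use assms(4) in auto)

lemma psd_kernel_gram:
  "psd_kernel n A \<Longrightarrow> \<exists>g. \<forall>r<n. \<forall>c<n. A r c = (\<Sum>m<n. g m r * cnj (g m c))"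
proof (induction n arbitrary: A)
  case 0
  then show ?case by simp
next
  case (Suc n)
  obtain g where g: "\<forall>r<n. \<forall>c<n. A r c - A r n * A n c / A n n = (\<Sum>m<n. g m r * cnj (g m c))"
    using Suc.IH[OF psd_kernel_schur_complement[OF Suc.prems]] by blast
  define a where "a = Re (A n n)"
  have a: "A n n = complex_of_real (sqrt a) * complex_of_real (sqrt a)"
    using psd_kernel_diag_nonneg[OF Suc.prems lessI]
    by (auto simp: a_def less_eq_complex_def complex_eq_iff simp flip: of_real_mult)
  define g' where
    "g' m r = (if m < n then (if r < n then g m r else 0) else A r n / complex_of_real (sqrt a))" for m r
  have last: "g' n r * cnj (g' n c) = A r n * A n c / A n n" if "c < Suc n" for r c
    using psd_kernel_hermitian[OF Suc.prems lessI that] a by (simp add: g'_def)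
  have "A r c = (\<Sum>m<Suc n. g' m r * cnj (g' m c))" if "r < Suc n" "c < Suc n" for r c
  proof (cases "r < n \<and> c < n")
    case True
    then show ?thesis using g last[OF that(2)] by (simp add: g'_def algebra_simps)
  next
    case False
    then show ?thesis using psd_kernel_last_row[OF Suc.prems that] last[OF that(2)] that
      by (auto simp: g'_def)
  qed
  then show ?case by blast
qed

text \<open>Composing two kernels in Gram (Kraus) form, that is, two completely positive maps, gives a kernel in
  Gram form indexed by pairs of Kraus indices.\<close>

lemma gram_kernel_compose:
  fixes A :: "'r \<Rightarrow> 's \<Rightarrow> 'r \<Rightarrow> 's \<Rightarrow> complex" and B :: "'s \<Rightarrow> 'q \<Rightarrow> 's \<Rightarrow> 'q \<Rightarrow> complex"
    and a :: "'m \<Rightarrow> 'r \<Rightarrow> 's \<Rightarrow> complex" and b :: "'k \<Rightarrow> 's \<Rightarrow> 'q \<Rightarrow> complex"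
  assumes A: "\<And>r s c t. r \<in> R \<Longrightarrow> s \<in> S \<Longrightarrow> c \<in> R \<Longrightarrow> t \<in> S \<Longrightarrow> A r s c t = (\<Sum>m\<in>M. a m r s * cnj (a m c t))"
    and B: "\<And>s r' t c'. s \<in> S \<Longrightarrow> r' \<in> Q \<Longrightarrow> t \<in> S \<Longrightarrow> c' \<in> Q \<Longrightarrow> B s r' t c' = (\<Sum>k\<in>K. b k s r' * cnj (b k t c'))"
    and r: "r \<in> R" and c: "c \<in> R" and r': "r' \<in> Q" and c': "c' \<in> Q"
  shows "(\<Sum>s\<in>S. \<Sum>t\<in>S. A r s c t * B s r' t c') =
     (\<Sum>p\<in>M \<times> K. (\<Sum>s\<in>S. a (fst p) r s * b (snd p) s r') * cnj (\<Sum>t\<in>S. a (fst p) c t * b (snd p) t c'))"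
proof -
  have "(\<Sum>s\<in>S. \<Sum>t\<in>S. A r s c t * B s r' t c') =
      (\<Sum>s\<in>S. \<Sum>t\<in>S. \<Sum>m\<in>M. \<Sum>k\<in>K. (a m r s * b k s r') * cnj (a m c t * b k t c'))"
  proof (intro sum.cong refl)
    fix s t assume s: "s \<in> S" and t: "t \<in> S"
    show "A r s c t * B s r' t c' = (\<Sum>m\<in>M. \<Sum>k\<in>K. (a m r s * b k s r') * cnj (a m c t * b k t c'))"
      unfolding A[OF r s c t] B[OF s r' t c'] sum_product by (intro sum.cong refl) (simp add: algebra_simps)
  qed
  also have "\<dots> = (\<Sum>m\<in>M. \<Sum>k\<in>K. \<Sum>s\<in>S. \<Sum>t\<in>S. (a m r s * b k s r') * cnj (a m c t * b k t c'))"
    by (rule sum_swap_pairs)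
  also have "\<dots> = (\<Sum>p\<in>M \<times> K. \<Sum>s\<in>S. \<Sum>t\<in>S.
      (a (fst p) r s * b (snd p) s r') * cnj (a (fst p) c t * b (snd p) t c'))"
    by (simp only: sum.cartesian_product[where A=M and B=K] split_def)
  also have "\<dots> = (\<Sum>p\<in>M \<times> K.
      (\<Sum>s\<in>S. a (fst p) r s * b (snd p) s r') * cnj (\<Sum>t\<in>S. a (fst p) c t * b (snd p) t c'))"
    by (simp add: sum_product cnj_sum)
  finally show ?thesis .
qed

lemma munit_carrier [simp]: "munit d i j \<in> carrier_mat d d"
  by (simp add: munit_def)

lemma munit_dim [simp]: "dim_row (munit d i j) = d" "dim_col (munit d i j) = d"
  by (simp_all add: munit_def)

lemma munit_index [simp]:
  "a < d \<Longrightarrow> b < d \<Longrightarrow> munit d i j $$ (a,b) = (if a = i \<and> b = j then 1 else 0)"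
  by (simp add: munit_def)

lemma mtrace_munit: "i < d \<Longrightarrow> j < d \<Longrightarrow> mtrace (munit d i j) = (if i = j then 1 else 0)"
proof -
  assume "i < d" "j < d"
  then have "mtrace (munit d i j) = (\<Sum>k<d. if k = i then (if i = j then 1 else 0) else 0)"
    unfolding mtrace_def by (intro sum.cong) auto
  then show ?thesis using \<open>i < d\<close> by simp
qed

lemma mtrace_add: "A \<in> carrier_mat n n \<Longrightarrow> B \<in> carrier_mat n n \<Longrightarrow> mtrace (A + B) = mtrace A + mtrace B"
  unfolding mtrace_def by (simp add: sum.distrib)

lemma mtrace_smult: "A \<in> carrier_mat n n \<Longrightarrow> mtrace (a \<cdot>\<^sub>m A) = a * mtrace A"
  unfolding mtrace_def by (auto simp: sum_distrib_left intro: sum.cong)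

lemma tensor_map_carrier [simp]: "tensor_map \<Phi>1 d1 e1 \<Phi>2 d2 e2 M \<in> carrier_mat (e1 * e2) (e1 * e2)"
  by (simp add: tensor_map_def)

lemma tensor_map_index:
  assumes "\<And>i j. i < d1 \<Longrightarrow> j < d1 \<Longrightarrow> \<Phi>1 (munit d1 i j) \<in> carrier_mat e1 e1"
    and "\<And>k l. k < d2 \<Longrightarrow> l < d2 \<Longrightarrow> \<Phi>2 (munit d2 k l) \<in> carrier_mat e2 e2"
    and "r < e1 * e2" "c < e1 * e2"
  shows "tensor_map \<Phi>1 d1 e1 \<Phi>2 d2 e2 M $$ (r,c) = (\<Sum>i<d1. \<Sum>j<d1. \<Sum>k<d2. \<Sum>l<d2.
     M $$ (i * d2 + k, j * d2 + l) *
       (\<Phi>1 (munit d1 i j) $$ (r div e2, c div e2) * \<Phi>2 (munit d2 k l) $$ (r mod e2, c mod e2)))"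
  unfolding tensor_map_def using assms(3,4)
  apply (simp add: index_mat)
  apply (intro sum.cong refl)
  subgoal for i j k l using assms(1)[of i j] assms(2)[of k l] by (auto simp: kron_def)
  done

lemma tensor_map_id_index:
  assumes "\<And>k l. k < d2 \<Longrightarrow> l < d2 \<Longrightarrow> \<Phi> (munit d2 k l) \<in> carrier_mat e2 e2"
    and r: "r < m * e2" and c: "c < m * e2"
  shows "tensor_map (\<lambda>X. X) m m \<Phi> d2 e2 M $$ (r,c) = (\<Sum>k<d2. \<Sum>l<d2.
     M $$ ((r div e2) * d2 + k, (c div e2) * d2 + l) * \<Phi> (munit d2 k l) $$ (r mod e2, c mod e2))"
proof -
  have rd: "r div e2 < m" and cd: "c div e2 < m" using r c by (auto simp: less_mult_imp_div_less)
  have "tensor_map (\<lambda>X. X) m m \<Phi> d2 e2 M $$ (r,c) = (\<Sum>i<m. \<Sum>j<m. \<Sum>k<d2. \<Sum>l<d2.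
      M $$ (i * d2 + k, j * d2 + l) *
        (munit m i j $$ (r div e2, c div e2) * \<Phi> (munit d2 k l) $$ (r mod e2, c mod e2)))"
    using tensor_map_index[of m "\<lambda>X. X" m d2 \<Phi> e2 r c M, OF _ assms] by simp
  also have "\<dots> = (\<Sum>i<m. \<Sum>j<m. (if i = r div e2 \<and> j = c div e2 then 1 else 0) * (\<Sum>k<d2. \<Sum>l<d2.
      M $$ (i * d2 + k, j * d2 + l) * \<Phi> (munit d2 k l) $$ (r mod e2, c mod e2)))"
    using rd cd by (intro sum.cong refl) auto
  also have "\<dots> = (\<Sum>k<d2. \<Sum>l<d2.
      M $$ ((r div e2) * d2 + k, (c div e2) * d2 + l) * \<Phi> (munit d2 k l) $$ (r mod e2, c mod e2))"
    by (rule sum_delta2[OF rd cd])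
  finally show ?thesis .
qed

lemma lin_map_expand:
  assumes lin: "lin_map din \<Phi>" and car: "\<And>A. A \<in> carrier_mat din din \<Longrightarrow> \<Phi> A \<in> carrier_mat dout dout"
    and X: "X \<in> carrier_mat din din" and b: "b < dout" and c: "c < dout"
  shows "\<Phi> X $$ (b,c) = (\<Sum>k<din. \<Sum>l<din. X $$ (k,l) * \<Phi> (munit din k l) $$ (b,c))"
proof -
  define XS where "XS S = mat din din (\<lambda>(k,l). if (k,l) \<in> S then X $$ (k,l) else 0)" for S
  have XS_carrier: "XS S \<in> carrier_mat din din" for S by (simp add: XS_def)
  have lin_add: "\<Phi> (A + B) = \<Phi> A + \<Phi> B"
    if "A \<in> carrier_mat din din" "B \<in> carrier_mat din din" for A B
    using lin that unfolding lin_map_def by blast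
  have lin_smult: "\<Phi> (a \<cdot>\<^sub>m A) = a \<cdot>\<^sub>m \<Phi> A" if "A \<in> carrier_mat din din" for A a
    using lin that unfolding lin_map_def by blast
  have expand: "\<Phi> (XS S) $$ (b,c) = (\<Sum>p\<in>S. X $$ p * \<Phi> (munit din (fst p) (snd p)) $$ (b,c))"
    if "finite S" "S \<subseteq> {..<din} \<times> {..<din}" for S
    using that
  proof (induction S rule: finite_induct)
    case empty
    have "XS {} = 0 \<cdot>\<^sub>m XS {}" by (auto simp: XS_def)
    then have zero: "0 \<cdot>\<^sub>m \<Phi> (XS {}) = \<Phi> (XS {})"
      using lin_smult[OF XS_carrier] by metis
    have "(0 \<cdot>\<^sub>m \<Phi> (XS {})) $$ (b,c) = 0" using car[OF XS_carrier[of "{}"]] b c by simp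
    then show ?case unfolding zero by simp
  next
    case (insert p S)
    obtain k l where p: "p = (k,l)" by (cases p)
    have kl: "k < din" "l < din" using insert.prems p by auto
    have "XS (insert p S) = XS S + X $$ p \<cdot>\<^sub>m munit din k l"
      using kl insert.hyps by (intro eq_matI) (auto simp: XS_def p)
    then have "\<Phi> (XS (insert p S)) = \<Phi> (XS S) + X $$ p \<cdot>\<^sub>m \<Phi> (munit din k l)"
      by (simp add: lin_add lin_smult XS_carrier)
    moreover have "\<Phi> (XS S) \<in> carrier_mat dout dout" "\<Phi> (munit din k l) \<in> carrier_mat dout dout"
      using car XS_carrier by auto
    ultimately have "\<Phi> (XS (insert p S)) $$ (b,c) = \<Phi> (XS S) $$ (b,c) + X $$ p * \<Phi> (munit din k l) $$ (b,c)"
      using b c by simp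
    then show ?case using insert by (simp add: p)
  qed
  have "XS ({..<din} \<times> {..<din}) = X" using X by (intro eq_matI) (auto simp: XS_def)
  then have "\<Phi> X $$ (b,c) = (\<Sum>(k,l)\<in>{..<din} \<times> {..<din}. X $$ (k,l) * \<Phi> (munit din k l) $$ (b,c))"
    using expand[of "{..<din} \<times> {..<din}"] by (simp add: case_prod_beta)
  then show ?thesis by (simp add: sum.cartesian_product)
qed

lemma cp_map_munit_carrier:
  "cp_map din dout \<Phi> \<Longrightarrow> i < din \<Longrightarrow> j < din \<Longrightarrow> \<Phi> (munit din i j) \<in> carrier_mat dout dout"
  unfolding cp_map_def by simp

lemma channel_munit_carrier:
  "channel din dout \<Phi> \<Longrightarrow> i < din \<Longrightarrow> j < din \<Longrightarrow> \<Phi> (munit din i j) \<in> carrier_mat dout dout"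
  unfolding channel_def by (simp add: cp_map_munit_carrier)

lemma channel_munit_trace:
  assumes "channel din dout \<Phi>" "i < din" "j < din"
  shows "(\<Sum>b<dout. \<Phi> (munit din i j) $$ (b,b)) = (if i = j then 1 else 0)"
proof -
  have "\<Phi> (munit din i j) \<in> carrier_mat dout dout"
    using assms by (rule channel_munit_carrier)
  then have "mtrace (\<Phi> (munit din i j)) = (\<Sum>b<dout. \<Phi> (munit din i j) $$ (b,b))"
    unfolding mtrace_def by simp
  moreover have "mtrace (\<Phi> (munit din i j)) = mtrace (munit din i j)"
    using assms unfolding channel_def tp_map_def by simp
  ultimately show ?thesis using mtrace_munit assms(2,3) by simp
qed

lemma cp_map_choi_kernel_psd:
  assumes cp: "cp_map din dout \<Phi>"
  shows "psd_kernel (din * dout) (\<lambda>r c. \<Phi> (munit din (r div dout) (c div dout)) $$ (r mod dout, c mod dout))"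
proof -
  define P where "P r \<longleftrightarrow> r div din = r mod din" for r
  \<comment> \<open>\<open>M = din \<cdot> P\<^sub>+\<close>, whose image under \<open>id \<otimes> \<Phi>\<close> is the Choi matrix of \<open>\<Phi>\<close>\<close>
  define M where "M = mat (din * din) (din * din) (\<lambda>(r,c). if P r \<and> P c then 1 else (0::complex))"
  have "psd_kernel (din * din) (\<lambda>i j. M $$ (i,j))"
    unfolding psd_kernel_def
  proof
    fix v :: "nat \<Rightarrow> complex"
    define S where "S = (\<Sum>c<din * din. if P c then v c else 0)"
    have "quad_form (din * din) (\<lambda>i j. M $$ (i,j)) v
        = (\<Sum>i<din * din. \<Sum>j<din * din. (if P i then cnj (v i) else 0) * (if P j then v j else 0))"
      unfolding quad_form_def M_def by (intro sum.cong refl) auto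
    also have "\<dots> = cnj S * S"
    proof -
      have conj: "cnj S = (\<Sum>i<din * din. if P i then cnj (v i) else 0)"
        unfolding S_def cnj_sum by (intro sum.cong) auto
      show ?thesis unfolding conj unfolding S_def sum_product by simp
    qed
    finally have "quad_form (din * din) (\<lambda>i j. M $$ (i,j)) v = cnj S * S" .
    then show "0 \<le> quad_form (din * din) (\<lambda>i j. M $$ (i,j)) v"
      using conjugate_square_positive[of S] by (simp add: mult.commute)
  qed
  then have "psd (din * dout) (tensor_map (\<lambda>X. X) din din \<Phi> din dout M)"
    using cp unfolding cp_map_def by (simp add: psd_iff_psd_kernel M_def)
  then have psd_T: "psd_kernel (din * dout) (\<lambda>r c. tensor_map (\<lambda>X. X) din din \<Phi> din dout M $$ (r,c))"
    by (simp add: psd_iff_psd_kernel)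
  have entries: "tensor_map (\<lambda>X. X) din din \<Phi> din dout M $$ (r,c)
      = \<Phi> (munit din (r div dout) (c div dout)) $$ (r mod dout, c mod dout)"
    if r: "r < din * dout" and c: "c < din * dout" for r c
  proof -
    have rd: "r div dout < din" and cd: "c div dout < din" using r c by (auto simp: less_mult_imp_div_less)
    have "tensor_map (\<lambda>X. X) din din \<Phi> din dout M $$ (r,c) = (\<Sum>k<din. \<Sum>l<din.
        (if k = r div dout \<and> l = c div dout then 1 else 0) * \<Phi> (munit din k l) $$ (r mod dout, c mod dout))"
      using rd cd cp_map_munit_carrier[OF cp]
      by (simp add: tensor_map_id_index r c) (intro sum.cong refl, auto simp: M_def P_def pair_index_less)
    also have "\<dots> = \<Phi> (munit din (r div dout) (c div dout)) $$ (r mod dout, c mod dout)"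
      by (rule sum_delta2[OF rd cd])
    finally show ?thesis .
  qed
  show ?thesis by (rule psd_kernel_cong[OF _ psd_T]) (simp add: entries)
qed

lemma cp_map_kraus:
  assumes "cp_map din dout \<Phi>"
  obtains g where "\<And>a a' I J. a < din \<Longrightarrow> a' < din \<Longrightarrow> I < dout \<Longrightarrow> J < dout \<Longrightarrow>
     \<Phi> (munit din a a') $$ (I,J) = (\<Sum>m<din * dout. g m (a * dout + I) * cnj (g m (a' * dout + J)))"
proof -
  obtain g where g: "\<forall>r<din * dout. \<forall>c<din * dout.
      \<Phi> (munit din (r div dout) (c div dout)) $$ (r mod dout, c mod dout)
        = (\<Sum>m<din * dout. g m r * cnj (g m c))"
    using psd_kernel_gram[OF cp_map_choi_kernel_psd[OF assms]] by blast
  show ?thesis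
  proof (rule that)
    fix a a' I J assume "a < din" "a' < din" "I < dout" "J < dout"
    then show "\<Phi> (munit din a a') $$ (I,J) = (\<Sum>m<din * dout. g m (a * dout + I) * cnj (g m (a' * dout + J)))"
      using g[rule_format, of "a * dout + I" "a' * dout + J"] by (simp add: pair_index_less)
  qed
qed

lemma choi_index:
  assumes "channel d d' \<Lambda>" and r: "r < d * d'" and c: "c < d * d'"
  shows "choi d d' \<Lambda> $$ (r,c) = \<Lambda> (munit d (r div d') (c div d')) $$ (r mod d', c mod d') / of_nat d"
proof -
  have rd: "r div d' < d" and cd: "c div d' < d" using r c by (auto simp: less_mult_imp_div_less)
  have "choi d d' \<Lambda> $$ (r,c) = (\<Sum>k<d. \<Sum>l<d.
      (if k = r div d' \<and> l = c div d' then 1 else 0) * (\<Lambda> (munit d k l) $$ (r mod d', c mod d') / of_nat d))"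
    unfolding choi_def using rd cd
    by (simp add: tensor_map_id_index[of d \<Lambda> d' r d c, OF channel_munit_carrier[OF assms(1)] r c])
      (intro sum.cong refl, auto simp: Pplus_def pair_index_less)
  also have "\<dots> = \<Lambda> (munit d (r div d') (c div d')) $$ (r mod d', c mod d') / of_nat d"
    by (rule sum_delta2[OF rd cd])
  finally show ?thesis .
qed

text \<open>The kernel \<open>\<Lambda>\<^sup>\<otimes>\<^sup>n(|I\<rangle>\<langle>J|)\<^sub>B\<^sub>C\<close> of the \<open>n\<close>-fold tensor power; the leading digit of an index in
  base \<open>d\<close> (resp. \<open>d'\<close>) belongs to the first tensor factor.\<close>

primrec tensor_pow_kernel ::
  "(complex mat \<Rightarrow> complex mat) \<Rightarrow> nat \<Rightarrow> nat \<Rightarrow> nat \<Rightarrow> nat \<Rightarrow> nat \<Rightarrow> nat \<Rightarrow> nat \<Rightarrow> complex" where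
  "tensor_pow_kernel \<Lambda> d d' 0 I J B C = 1"
| "tensor_pow_kernel \<Lambda> d d' (Suc n) I J B C =
     \<Lambda> (munit d (I div d^n) (J div d^n)) $$ (B div d'^n, C div d'^n)
     * tensor_pow_kernel \<Lambda> d d' n (I mod d^n) (J mod d^n) (B mod d'^n) (C mod d'^n)"

lemma tensor_pow_carrier:
  "Y \<in> carrier_mat (d^n) (d^n) \<Longrightarrow> tensor_pow \<Lambda> d d' n Y \<in> carrier_mat (d'^n) (d'^n)"
  by (cases n) simp_all

lemma tensor_pow_index:
  assumes car: "\<And>i j. i < d \<Longrightarrow> j < d \<Longrightarrow> \<Lambda> (munit d i j) \<in> carrier_mat d' d'"
  shows "Y \<in> carrier_mat (d^n) (d^n) \<Longrightarrow> B < d'^n \<Longrightarrow> C < d'^n \<Longrightarrow>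
    tensor_pow \<Lambda> d d' n Y $$ (B,C) = (\<Sum>I<d^n. \<Sum>J<d^n. Y $$ (I,J) * tensor_pow_kernel \<Lambda> d d' n I J B C)"
proof (induction n arbitrary: Y B C)
  case 0
  then show ?case by auto
next
  case (Suc n)
  let ?N = "d^n" and ?N' = "d'^n"
  have unit_index: "tensor_pow \<Lambda> d d' n (munit ?N k l) $$ (B,C) = tensor_pow_kernel \<Lambda> d d' n k l B C"
    if "k < ?N" "l < ?N" "B < ?N'" "C < ?N'" for k l B C
  proof -
    have "tensor_pow \<Lambda> d d' n (munit ?N k l) $$ (B,C)
        = (\<Sum>I<?N. \<Sum>J<?N. (if I = k \<and> J = l then 1 else 0) * tensor_pow_kernel \<Lambda> d d' n I J B C)"
      using Suc.IH[of "munit ?N k l"] that by (auto intro!: sum.cong)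
    also have "\<dots> = tensor_pow_kernel \<Lambda> d d' n k l B C" by (rule sum_delta2[OF that(1,2)])
    finally show ?thesis .
  qed
  have B: "B < d' * ?N'" and C: "C < d' * ?N'" using Suc.prems by simp_all
  have "tensor_pow \<Lambda> d d' (Suc n) Y $$ (B,C) = (\<Sum>i<d. \<Sum>j<d. \<Sum>k<?N. \<Sum>l<?N.
      Y $$ (i * ?N + k, j * ?N + l) *
        (\<Lambda> (munit d i j) $$ (B div ?N', C div ?N')
          * tensor_pow \<Lambda> d d' n (munit ?N k l) $$ (B mod ?N', C mod ?N')))"
    unfolding tensor_pow.simps by (rule tensor_map_index) (use car tensor_pow_carrier B C in auto)
  also have "\<dots> = (\<Sum>i<d. \<Sum>j<d. \<Sum>k<?N. \<Sum>l<?N.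
      Y $$ (i * ?N + k, j * ?N + l) * tensor_pow_kernel \<Lambda> d d' (Suc n) (i * ?N + k) (j * ?N + l) B C)"
    using B C by (intro sum.cong refl) (simp add: unit_index mod_less_of_less_mult)
  also have "\<dots> = (\<Sum>I<d^Suc n. \<Sum>J<d^Suc n. Y $$ (I,J) * tensor_pow_kernel \<Lambda> d d' (Suc n) I J B C)"
    by (simp only: power_Suc sum_lessThan_mult2)
  finally show ?case .
qed

lemma tensor_pow_kernel_trace:
  assumes "channel d d' \<Lambda>"
  shows "I < d^n \<Longrightarrow> J < d^n \<Longrightarrow> (\<Sum>B<d'^n. tensor_pow_kernel \<Lambda> d d' n I J B B) = (if I = J then 1 else 0)"
proof (induction n arbitrary: I J)
  case 0
  then show ?case by simp
next
  case (Suc n)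
  let ?N = "d^n" and ?N' = "d'^n"
  have I: "I div ?N < d" "I mod ?N < ?N" and J: "J div ?N < d" "J mod ?N < ?N"
    using Suc.prems by (auto simp: less_mult_imp_div_less mod_less_of_less_mult mult.commute)
  have "(\<Sum>B<d'^Suc n. tensor_pow_kernel \<Lambda> d d' (Suc n) I J B B)
      = (\<Sum>b<d'. \<Lambda> (munit d (I div ?N) (J div ?N)) $$ (b,b))
        * (\<Sum>B<?N'. tensor_pow_kernel \<Lambda> d d' n (I mod ?N) (J mod ?N) B B)"
    by (simp add: sum_lessThan_mult sum_product)
  also have "\<dots> = (if I div ?N = J div ?N \<and> I mod ?N = J mod ?N then 1 else 0)"
    using channel_munit_trace[OF assms I(1) J(1)] Suc.IH[OF I(2) J(2)] by simp
  also have "\<dots> = (if I = J then 1 else 0)"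
    by (metis div_mult_mod_eq)
  finally show ?case .
qed

lemma mtrace_tensor_pow:
  assumes ch: "channel d d' \<Lambda>" and Y: "Y \<in> carrier_mat (d^n) (d^n)"
  shows "mtrace (tensor_pow \<Lambda> d d' n Y) = mtrace Y"
proof -
  have "mtrace (tensor_pow \<Lambda> d d' n Y)
      = (\<Sum>B<d'^n. \<Sum>I<d^n. \<Sum>J<d^n. Y $$ (I,J) * tensor_pow_kernel \<Lambda> d d' n I J B B)"
    unfolding mtrace_def using carrier_matD(1)[OF tensor_pow_carrier[OF Y]]
      tensor_pow_index[where \<Lambda>=\<Lambda> and d=d and d'=d', OF channel_munit_carrier[OF ch] Y] by simp
  also have "\<dots> = (\<Sum>I<d^n. \<Sum>J<d^n. Y $$ (I,J) * (\<Sum>B<d'^n. tensor_pow_kernel \<Lambda> d d' n I J B B))"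
    by (simp add: sum_distrib_left sum.swap[of _ "{..<d'^n}"])
  also have "\<dots> = (\<Sum>I<d^n. Y $$ (I,I))"
    by (simp add: tensor_pow_kernel_trace[OF ch] if_distrib cong: if_cong)
  also have "\<dots> = mtrace Y" unfolding mtrace_def using Y by simp
  finally show ?thesis .
qed

lemma ent_fid_choi:
  assumes "\<And>k l. k < K \<Longrightarrow> l < K \<Longrightarrow> \<Psi> (munit K k l) \<in> carrier_mat K K"
  shows "ent_fid K (tensor_map (\<lambda>X. X) K K \<Psi> K K (Pplus K))
    = Re (\<Sum>i<K. \<Sum>j<K. \<Psi> (munit K i j) $$ (i,j)) / (real K)^2"
proof -
  have entry: "tensor_map (\<lambda>X. X) K K \<Psi> K K (Pplus K) $$ (i * K + i, j * K + j)
      = \<Psi> (munit K i j) $$ (i,j) / of_nat K"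
    if i: "i < K" and j: "j < K" for i j
  proof -
    have "tensor_map (\<lambda>X. X) K K \<Psi> K K (Pplus K) $$ (i * K + i, j * K + j)
        = (\<Sum>k<K. \<Sum>l<K. (if k = i \<and> l = j then 1 else 0) * (\<Psi> (munit K k l) $$ (i,j) / of_nat K))"
      using tensor_map_id_index[of K \<Psi> K "i * K + i" K "j * K + j", OF assms] i j
      by (simp add: pair_index_less) (intro sum.cong refl, auto simp: Pplus_def pair_index_less)
    also have "\<dots> = \<Psi> (munit K i j) $$ (i,j) / of_nat K" by (rule sum_delta2[OF i j])
    finally show ?thesis .
  qed
  have "ent_fid K (tensor_map (\<lambda>X. X) K K \<Psi> K K (Pplus K))
      = Re ((\<Sum>i<K. \<Sum>j<K. \<Psi> (munit K i j) $$ (i,j)) / of_nat K / of_nat K)"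
    unfolding ent_fid_def by (simp add: entry sum_divide_distrib)
  then show ?thesis by (simp add: power2_eq_square)
qed

section \<open>Symmetric two-copy extensions of a map cannot have high fidelity\<close>

lemma cmod_sum_sq_le:
  fixes z :: "'a \<Rightarrow> complex"
  shows "(cmod (\<Sum>a\<in>S. z a))^2 \<le> real (card S) * (\<Sum>a\<in>S. (cmod (z a))^2)"
proof -
  have "(cmod (\<Sum>a\<in>S. z a))^2 \<le> (\<Sum>a\<in>S. cmod (z a))^2"
    by (intro power_mono norm_sum) simp
  also have "\<dots> \<le> real (card S) * (\<Sum>a\<in>S. (cmod (z a))^2)"
    using sum_squared_le_sum_of_squares[of "\<lambda>a. cmod (z a)" S] by (simp add: mult.commute)
  finally show ?thesis .
qed

lemma cmod_add_sq_le: "(cmod (p + q))^2 \<le> 3 * (cmod p)^2 + 3/2 * (cmod q)^2"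
proof -
  have "(cmod (p + q))^2 \<le> (cmod p + cmod q)^2"
    by (intro power_mono norm_triangle_ineq) simp
  also have "\<dots> \<le> 3 * (cmod p)^2 + 3/2 * (cmod q)^2"
    using zero_le_power2[of "cmod p - cmod q / 2"] by (simp add: power2_eq_square algebra_simps)
  finally show ?thesis .
qed

lemma cmod_sum_sq_le_split:
  fixes u :: "nat \<Rightarrow> complex"
  assumes "b < K"
  shows "(cmod (\<Sum>a<K. u a))^2 \<le> 3 * (cmod (u b))^2 + 3/2 * (real K - 1) * (\<Sum>a\<in>{..<K}-{b}. (cmod (u a))^2)"
proof -
  have "(\<Sum>a<K. u a) = u b + (\<Sum>a\<in>{..<K}-{b}. u a)" using assms by (simp add: sum.remove)
  then have "(cmod (\<Sum>a<K. u a))^2 \<le> 3 * (cmod (u b))^2 + 3/2 * (cmod (\<Sum>a\<in>{..<K}-{b}. u a))^2"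
    using cmod_add_sq_le by simp
  moreover have "real (card ({..<K}-{b})) = real K - 1" using assms by simp
  then have "(cmod (\<Sum>a\<in>{..<K}-{b}. u a))^2 \<le> (real K - 1) * (\<Sum>a\<in>{..<K}-{b}. (cmod (u a))^2)"
    using cmod_sum_sq_le[of u "{..<K}-{b}"] by simp
  ultimately show ?thesis by linarith
qed

lemma diagonals_sum_le:
  fixes x :: "nat \<Rightarrow> nat \<Rightarrow> nat \<Rightarrow> real"
  assumes x_nonneg: "\<And>a y y'. 0 \<le> x a y y'"
  shows "(\<Sum>b<K. x b b b + (\<Sum>a\<in>{..<K}-{b}. x a a b) + (\<Sum>a\<in>{..<K}-{b}. x a b a))
    \<le> (\<Sum>a<K. \<Sum>y<K. \<Sum>y'<K. x a y y')"
proof -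
  have "(\<Sum>b<K. x b b b + (\<Sum>a\<in>{..<K}-{b}. x a a b)) = (\<Sum>b<K. \<Sum>a<K. x a a b)"
    by (intro sum.cong refl) (simp add: sum.remove)
  also have "\<dots> = (\<Sum>a<K. \<Sum>y'<K. x a a y')" by (rule sum.swap)
  finally have first: "(\<Sum>b<K. x b b b + (\<Sum>a\<in>{..<K}-{b}. x a a b)) = (\<Sum>a<K. \<Sum>y'<K. x a a y')" .
  have "(\<Sum>b<K. \<Sum>a\<in>{..<K}-{b}. x a b a) = (\<Sum>b<K. \<Sum>a\<in>{a. a \<in> {..<K} \<and> a \<noteq> b}. x a b a)"
    by (intro sum.cong) auto
  also have "\<dots> = (\<Sum>a<K. \<Sum>b\<in>{b. b \<in> {..<K} \<and> a \<noteq> b}. x a b a)"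
    by (rule sum.swap_restrict) simp_all
  also have "\<dots> = (\<Sum>a<K. \<Sum>y\<in>{..<K}-{a}. x a y a)"
    by (intro sum.cong) auto
  finally have second: "(\<Sum>b<K. \<Sum>a\<in>{..<K}-{b}. x a b a) = (\<Sum>a<K. \<Sum>y\<in>{..<K}-{a}. x a y a)" .
  have "(\<Sum>y'<K. x a a y') + (\<Sum>y\<in>{..<K}-{a}. x a y a) \<le> (\<Sum>y<K. \<Sum>y'<K. x a y y')" if "a < K" for a
  proof -
    have "(\<Sum>y\<in>{..<K}-{a}. x a y a) \<le> (\<Sum>y\<in>{..<K}-{a}. \<Sum>y'<K. x a y y')"
      using that x_nonneg by (intro sum_mono member_le_sum) auto
    then show ?thesis using that by (simp add: sum.remove[of "{..<K}" a])
  qed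
  then have "(\<Sum>a<K. (\<Sum>y'<K. x a a y') + (\<Sum>y\<in>{..<K}-{a}. x a y a)) \<le> (\<Sum>a<K. \<Sum>y<K. \<Sum>y'<K. x a y y')"
    by (intro sum_mono) simp
  then show ?thesis using first second by (simp add: sum.distrib)
qed

lemma diagonal_pair_sq_le:
  fixes w :: "nat \<Rightarrow> nat \<Rightarrow> nat \<Rightarrow> complex"
  assumes K: "K \<ge> 4" and b: "b < K"
  defines "x a y y' \<equiv> (cmod (w a y y'))^2"
  shows "(cmod (\<Sum>a<K. w a a b))^2 + (cmod (\<Sum>a<K. w a b a))^2
    \<le> 3/2 * real K * (x b b b + (\<Sum>a\<in>{..<K}-{b}. x a a b) + (\<Sum>a\<in>{..<K}-{b}. x a b a))"
proof -
  define A where "A = (\<Sum>a\<in>{..<K}-{b}. x a a b)"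
  define B where "B = (\<Sum>a\<in>{..<K}-{b}. x a b a)"
  have nonneg: "0 \<le> A" "0 \<le> B" "0 \<le> x b b b"
    unfolding A_def B_def x_def by (auto intro: sum_nonneg)
  have "(cmod (\<Sum>a<K. w a a b))^2 + (cmod (\<Sum>a<K. w a b a))^2
      \<le> (3 * x b b b + 3/2 * (real K - 1) * A) + (3 * x b b b + 3/2 * (real K - 1) * B)"
    unfolding A_def B_def x_def by (intro add_mono cmod_sum_sq_le_split b)
  also have "\<dots> = 6 * x b b b + 3/2 * (real K - 1) * (A + B)" by (simp add: field_simps)
  also have "\<dots> \<le> 3/2 * real K * x b b b + 3/2 * real K * (A + B)"
    using K nonneg by (intro add_mono mult_right_mono) auto
  also have "\<dots> = 3/2 * real K * (x b b b + A + B)" by (simp add: field_simps)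
  finally show ?thesis unfolding A_def B_def .
qed

text \<open>The two diagonals \<open>(a, a, b)\<close> and \<open>(a, b, a)\<close> of a \<open>K \<times> K \<times> K\<close> array meet only in the entries
  \<open>(b, b, b)\<close>; this is what keeps the constant below the trivial \<open>2 K\<close>.\<close>

lemma two_diagonals_sq_le:
  fixes w :: "nat \<Rightarrow> nat \<Rightarrow> nat \<Rightarrow> complex"
  assumes K: "K \<ge> 4"
  shows "(\<Sum>b<K. (cmod (\<Sum>a<K. w a a b))^2) + (\<Sum>b<K. (cmod (\<Sum>a<K. w a b a))^2)
     \<le> 3/2 * real K * (\<Sum>a<K. \<Sum>y<K. \<Sum>y'<K. (cmod (w a y y'))^2)"
proof -
  let ?x = "\<lambda>a y y'. (cmod (w a y y'))^2"
  have "(\<Sum>b<K. (cmod (\<Sum>a<K. w a a b))^2) + (\<Sum>b<K. (cmod (\<Sum>a<K. w a b a))^2)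
      \<le> (\<Sum>b<K. 3/2 * real K * (?x b b b + (\<Sum>a\<in>{..<K}-{b}. ?x a a b) + (\<Sum>a\<in>{..<K}-{b}. ?x a b a)))"
    unfolding sum.distrib[symmetric] by (intro sum_mono diagonal_pair_sq_le K) simp
  also have "\<dots> \<le> 3/2 * real K * (\<Sum>a<K. \<Sum>y<K. \<Sum>y'<K. ?x a y y')"
    unfolding sum_distrib_left[symmetric] by (intro mult_left_mono diagonals_sum_le) auto
  finally show ?thesis .
qed

text \<open>\<open>w \<mu> a y y'\<close> are the Kraus vectors \<open>\<langle>y y'| A\<^sub>\<mu> |a\<rangle>\<close> of a map from \<open>\<complex>\<^sup>K\<close> to \<open>\<complex>\<^sup>K \<otimes> \<complex>\<^sup>K\<close> whose
  two marginals are both the map \<open>\<Psi>\<close>, given on matrix units by \<open>\<Psi> a a' = \<Psi>(|a\<rangle>\<langle>a'|)\<close>.\<close>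

definition sym_ext_kraus ::
  "nat \<Rightarrow> (nat \<Rightarrow> nat \<Rightarrow> complex mat) \<Rightarrow> ('m \<Rightarrow> nat \<Rightarrow> nat \<Rightarrow> nat \<Rightarrow> complex) \<Rightarrow> 'm set \<Rightarrow> bool" where
  "sym_ext_kraus K \<Psi> w W \<longleftrightarrow>
     (\<forall>a<K. \<forall>a'<K. \<forall>y<K. \<forall>z<K. \<Psi> a a' $$ (y,z) = (\<Sum>y'<K. \<Sum>\<mu>\<in>W. w \<mu> a y y' * cnj (w \<mu> a' z y'))) \<and>
     (\<forall>a<K. \<forall>a'<K. \<forall>y<K. \<forall>z<K. \<Psi> a a' $$ (y,z) = (\<Sum>y'<K. \<Sum>\<mu>\<in>W. w \<mu> a y' y * cnj (w \<mu> a' y' z)))"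

lemma sum_mult_cnj: "(\<Sum>i\<in>A. \<Sum>j\<in>A. u i * cnj (u j)) = complex_of_real ((cmod (\<Sum>i\<in>A. u i))^2)"
proof -
  have "(\<Sum>i\<in>A. \<Sum>j\<in>A. u i * cnj (u j)) = (\<Sum>i\<in>A. u i) * cnj (\<Sum>j\<in>A. u j)"
    by (simp add: sum_product cnj_sum)
  also have "\<dots> = complex_of_real ((cmod (\<Sum>i\<in>A. u i))^2)" by (rule complex_norm_square[symmetric])
  finally show ?thesis .
qed

text \<open>Evaluating the fidelity sum through either marginal turns it into a sum over one of the two
  diagonals of the Kraus vectors.\<close>

lemma sym_ext_kraus_fid_le:
  assumes ext: "sym_ext_kraus K \<Psi> w W" and K: "K \<ge> 4"
  shows "Re (\<Sum>i<K. \<Sum>j<K. \<Psi> i j $$ (i,j)) \<le> 3/4 * real K * Re (\<Sum>a<K. \<Sum>y<K. \<Psi> a a $$ (y,y))"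
proof -
  have ext1: "\<Psi> a a' $$ (y,z) = (\<Sum>y'<K. \<Sum>\<mu>\<in>W. w \<mu> a y y' * cnj (w \<mu> a' z y'))"
    and ext2: "\<Psi> a a' $$ (y,z) = (\<Sum>y'<K. \<Sum>\<mu>\<in>W. w \<mu> a y' y * cnj (w \<mu> a' y' z))"
    if "a < K" "a' < K" "y < K" "z < K" for a a' y z
    using ext that unfolding sym_ext_kraus_def by blast+
  have "(\<Sum>i<K. \<Sum>j<K. \<Psi> i j $$ (i,j)) = (\<Sum>i<K. \<Sum>j<K. \<Sum>y'<K. \<Sum>\<mu>\<in>W. w \<mu> i i y' * cnj (w \<mu> j j y'))"
    by (simp add: ext1)
  also have "\<dots> = (\<Sum>\<mu>\<in>W. \<Sum>y'<K. complex_of_real ((cmod (\<Sum>i<K. w \<mu> i i y'))^2))"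
    by (simp add: sum_swap_pairs sum.swap[of _ "{..<K}" W] sum_mult_cnj)
  finally have F1: "Re (\<Sum>i<K. \<Sum>j<K. \<Psi> i j $$ (i,j)) = (\<Sum>\<mu>\<in>W. \<Sum>y'<K. (cmod (\<Sum>i<K. w \<mu> i i y'))^2)"
    by simp
  have "(\<Sum>i<K. \<Sum>j<K. \<Psi> i j $$ (i,j)) = (\<Sum>i<K. \<Sum>j<K. \<Sum>y'<K. \<Sum>\<mu>\<in>W. w \<mu> i y' i * cnj (w \<mu> j y' j))"
    by (simp add: ext2)
  also have "\<dots> = (\<Sum>\<mu>\<in>W. \<Sum>y'<K. complex_of_real ((cmod (\<Sum>i<K. w \<mu> i y' i))^2))"
    by (simp add: sum_swap_pairs sum.swap[of _ "{..<K}" W] sum_mult_cnj)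
  finally have F2: "Re (\<Sum>i<K. \<Sum>j<K. \<Psi> i j $$ (i,j)) = (\<Sum>\<mu>\<in>W. \<Sum>y'<K. (cmod (\<Sum>i<K. w \<mu> i y' i))^2)"
    by simp
  have "(\<Sum>a<K. \<Sum>y<K. \<Psi> a a $$ (y,y)) = (\<Sum>a<K. \<Sum>y<K. \<Sum>y'<K. \<Sum>\<mu>\<in>W. complex_of_real ((cmod (w \<mu> a y y'))^2))"
    by (simp add: ext1 flip: complex_norm_square)
  then have Nr: "Re (\<Sum>a<K. \<Sum>y<K. \<Psi> a a $$ (y,y)) = (\<Sum>\<mu>\<in>W. \<Sum>a<K. \<Sum>y<K. \<Sum>y'<K. (cmod (w \<mu> a y y'))^2)"
    by (simp add: sum.swap[of _ W])
  have "2 * Re (\<Sum>i<K. \<Sum>j<K. \<Psi> i j $$ (i,j))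
      = (\<Sum>\<mu>\<in>W. (\<Sum>y'<K. (cmod (\<Sum>i<K. w \<mu> i i y'))^2) + (\<Sum>y'<K. (cmod (\<Sum>i<K. w \<mu> i y' i))^2))"
    using F1 F2 by (simp add: sum.distrib)
  also have "\<dots> \<le> (\<Sum>\<mu>\<in>W. 3/2 * real K * (\<Sum>a<K. \<Sum>y<K. \<Sum>y'<K. (cmod (w \<mu> a y y'))^2))"
    by (intro sum_mono two_diagonals_sq_le K)
  also have "\<dots> = 3/2 * real K * Re (\<Sum>a<K. \<Sum>y<K. \<Psi> a a $$ (y,y))"
    unfolding Nr by (simp add: sum_distrib_left)
  finally show ?thesis by simp
qed

lemma protocol_branch_carrier:
  assumes "oneway_protocol d d' n K Es Ds" "x < length Es" "A \<in> carrier_mat K K"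
  shows "(Ds ! x) (tensor_pow \<Lambda> d d' n ((Es ! x) A)) \<in> carrier_mat K K"
proof -
  have "(Es ! x) A \<in> carrier_mat (d^n) (d^n)" "channel (d'^n) K (Ds ! x)"
    using assms unfolding oneway_protocol_def cp_map_def by auto
  then show ?thesis using tensor_pow_carrier unfolding channel_def cp_map_def by blast
qed

lemma protocol_fid_eq:
  assumes "oneway_protocol d d' n K Es Ds"
  shows "protocol_fid d d' \<Lambda> n K Es Ds = (\<Sum>x<length Es.
    Re (\<Sum>i<K. \<Sum>j<K. (Ds ! x) (tensor_pow \<Lambda> d d' n ((Es ! x) (munit K i j))) $$ (i,j)) / (real K)^2)"
  unfolding protocol_fid_def
  by (intro sum.cong refl ent_fid_choi protocol_branch_carrier[OF assms]) auto

lemma protocol_trace_sum: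
  assumes "channel d d' \<Lambda>" and prot: "oneway_protocol d d' n K Es Ds"
  shows "(\<Sum>x<length Es. \<Sum>a<K. \<Sum>y<K. (Ds ! x) (tensor_pow \<Lambda> d d' n ((Es ! x) (munit K a a))) $$ (y,y))
    = of_nat K"
proof -
  have "(\<Sum>y<K. (Ds ! x) (tensor_pow \<Lambda> d d' n ((Es ! x) (munit K a a))) $$ (y,y))
      = mtrace ((Es ! x) (munit K a a))"
    if "x < length Es" "a < K" for x a
  proof -
    let ?X = "(Es ! x) (munit K a a)"
    have X: "?X \<in> carrier_mat (d^n) (d^n)" and D: "channel (d'^n) K (Ds ! x)"
      using prot that unfolding oneway_protocol_def cp_map_def by auto
    have "(\<Sum>y<K. (Ds ! x) (tensor_pow \<Lambda> d d' n ?X) $$ (y,y)) = mtrace ((Ds ! x) (tensor_pow \<Lambda> d d' n ?X))"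
      using carrier_matD(1)[OF protocol_branch_carrier[where \<Lambda>=\<Lambda>, OF prot that(1) munit_carrier]]
      unfolding mtrace_def by simp
    also have "\<dots> = mtrace (tensor_pow \<Lambda> d d' n ?X)"
      using D tensor_pow_carrier[OF X] unfolding channel_def tp_map_def by blast
    also have "\<dots> = mtrace ?X" by (rule mtrace_tensor_pow[OF assms(1) X])
    finally show ?thesis .
  qed
  then have "(\<Sum>x<length Es. \<Sum>a<K. \<Sum>y<K. (Ds ! x) (tensor_pow \<Lambda> d d' n ((Es ! x) (munit K a a))) $$ (y,y))
      = (\<Sum>a<K. \<Sum>x<length Es. mtrace ((Es ! x) (munit K a a)))"
    by (simp add: sum.swap[of _ "{..<length Es}"])
  also have "\<dots> = (\<Sum>a<K. mtrace (munit K a a))"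
    using prot unfolding oneway_protocol_def by simp
  also have "\<dots> = of_nat K" by (simp add: mtrace_munit)
  finally show ?thesis .
qed

section \<open>The trivial protocol achieves rate zero\<close>

definition prepare_ground :: "nat \<Rightarrow> complex mat \<Rightarrow> complex mat" where
  "prepare_ground N A = A $$ (0,0) \<cdot>\<^sub>m munit N 0 0"

definition discard :: "complex mat \<Rightarrow> complex mat" where
  "discard M = mat 1 1 (\<lambda>_. mtrace M)"

lemma mtrace_prepare_ground: "N \<ge> 1 \<Longrightarrow> mtrace (prepare_ground N A) = A $$ (0,0)"
  unfolding prepare_ground_def by (simp add: mtrace_smult[of _ N] mtrace_munit)

lemma cp_map_prepare_ground:
  assumes N: "N \<ge> 1"
  shows "cp_map 1 N (prepare_ground N)"
  unfolding cp_map_def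
proof (intro conjI allI impI ballI)
  show "lin_map 1 (prepare_ground N)"
    unfolding lin_map_def prepare_ground_def by (auto intro!: eq_matI simp: algebra_simps)
  show "prepare_ground N A \<in> carrier_mat N N" for A unfolding prepare_ground_def by simp
next
  fix m M assume psd: "psd (m * 1) M"
  let ?T = "tensor_map (\<lambda>X. X) m m (prepare_ground N) 1 N M"
  have entry: "?T $$ (i * N + k, j * N + l) = (if k = 0 \<and> l = 0 then M $$ (i,j) else 0)"
    if "i < m" "j < m" "k < N" "l < N" for i j k l
    using tensor_map_id_index[of 1 "prepare_ground N" N "i * N + k" m "j * N + l" M] that
    by (simp add: pair_index_less prepare_ground_def)
  have "quad_form (m * N) (\<lambda>r c. ?T $$ (r,c)) v = quad_form m (\<lambda>i j. M $$ (i,j)) (\<lambda>i. v (i * N))" for v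
  proof -
    have "quad_form (m * N) (\<lambda>r c. ?T $$ (r,c)) v = (\<Sum>i<m. \<Sum>j<m. \<Sum>k<N. \<Sum>l<N.
        (if k = 0 \<and> l = 0 then 1 else 0) * (cnj (v (i * N + k)) * M $$ (i,j) * v (j * N + l)))"
      unfolding quad_form_def sum_lessThan_mult2
    proof (intro sum.cong refl)
      fix i j k l assume "i \<in> {..<m}" "j \<in> {..<m}" "k \<in> {..<N}" "l \<in> {..<N}"
      then show "cnj (v (i * N + k)) * ?T $$ (i * N + k, j * N + l) * v (j * N + l)
          = (if k = 0 \<and> l = 0 then 1 else 0) * (cnj (v (i * N + k)) * M $$ (i,j) * v (j * N + l))"
        using entry[of i j k l] by simp
    qed
    then show ?thesis using N by (simp add: sum_delta2 quad_form_def)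
  qed
  then show "psd (m * N) ?T"
    using psd by (simp add: psd_iff_psd_kernel psd_kernel_def)
qed

lemma cp_map_discard: "cp_map N 1 discard"
  unfolding cp_map_def
proof (intro conjI allI impI ballI)
  show "lin_map N discard"
    unfolding lin_map_def discard_def by (auto intro!: eq_matI simp: mtrace_add mtrace_smult)
  show "discard A \<in> carrier_mat 1 1" for A unfolding discard_def by simp
next
  fix m M assume psd: "psd (m * N) M"
  let ?T = "tensor_map (\<lambda>X. X) m m discard N 1 M"
  have entry: "?T $$ (i,j) = (\<Sum>k<N. M $$ (i * N + k, j * N + k))" if "i < m" "j < m" for i j
  proof -
    have "?T $$ (i,j) = (\<Sum>k<N. \<Sum>l<N. M $$ (i * N + k, j * N + l) * (if k = l then 1 else 0))"
      using tensor_map_id_index[of N discard 1 i m j M] that by (simp add: discard_def mtrace_munit)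
    also have "\<dots> = (\<Sum>k<N. \<Sum>l<N. if l = k then M $$ (i * N + k, j * N + l) else 0)"
      by (intro sum.cong refl) auto
    finally show ?thesis by simp
  qed
  have "quad_form (m * 1) (\<lambda>i j. ?T $$ (i,j)) v
      = (\<Sum>k<N. quad_form (m * N) (\<lambda>r c. M $$ (r,c)) (\<lambda>I. if I mod N = k then v (I div N) else 0))" for v
  proof -
    have "quad_form (m * 1) (\<lambda>i j. ?T $$ (i,j)) v
        = (\<Sum>i<m. \<Sum>j<m. \<Sum>k<N. cnj (v i) * M $$ (i * N + k, j * N + k) * v j)"
      unfolding quad_form_def mult_1_right
    proof (intro sum.cong refl)
      fix i j assume "i \<in> {..<m}" "j \<in> {..<m}"
      then show "cnj (v i) * ?T $$ (i,j) * v j = (\<Sum>k<N. cnj (v i) * M $$ (i * N + k, j * N + k) * v j)"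
        using entry by (simp add: sum_distrib_left sum_distrib_right)
    qed
    also have "\<dots> = (\<Sum>k<N. \<Sum>i<m. \<Sum>j<m. cnj (v i) * M $$ (i * N + k, j * N + k) * v j)"
      by (rule sum_rotate3[symmetric])
    finally show ?thesis by (simp add: quad_form_slice)
  qed
  then show "psd (m * 1) ?T"
    using psd tensor_map_carrier[of "\<lambda>X. X" m m discard N 1 M]
    by (simp add: psd_iff_psd_kernel psd_kernel_def sum_nonneg)
qed

lemma channel_discard: "channel N 1 discard"
  unfolding channel_def tp_map_def using cp_map_discard by (simp add: discard_def mtrace_def)

lemma oneway_protocol_trivial:
  assumes "d \<ge> 1"
  shows "oneway_protocol d d' n 1 [prepare_ground (d^n)] [discard]"
proof -
  have "mtrace (prepare_ground (d^n) A) = mtrace A" if "A \<in> carrier_mat 1 1" for A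
  proof -
    have "mtrace A = A $$ (0,0)" using that by (simp add: mtrace_def)
    then show ?thesis using assms by (simp add: mtrace_prepare_ground)
  qed
  then show ?thesis
    unfolding oneway_protocol_def using assms cp_map_prepare_ground[of "d^n"] channel_discard
    by (auto simp: less_Suc_eq)
qed

lemma protocol_fid_trivial:
  assumes "d \<ge> 1" "channel d d' \<Lambda>"
  shows "protocol_fid d d' \<Lambda> n 1 [prepare_ground (d^n)] [discard] = 1"
proof -
  have "prepare_ground (d^n) (munit 1 0 0) \<in> carrier_mat (d^n) (d^n)" by (simp add: prepare_ground_def)
  then show ?thesis
    using assms protocol_fid_eq[OF oneway_protocol_trivial[OF assms(1)], where \<Lambda>=\<Lambda>]
    by (simp add: discard_def mtrace_tensor_pow mtrace_prepare_ground)
qed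

lemma oneway_achievable_zero:
  assumes "d \<ge> 1" "channel d d' \<Lambda>"
  shows "oneway_achievable d d' \<Lambda> 0"
  unfolding oneway_achievable_def
  using oneway_protocol_trivial[OF assms(1)] protocol_fid_trivial[OF assms]
  by (fastforce simp: mult_nonneg_nonpos)

section \<open>The broadcast map of a symmetric extension\<close>

text \<open>A symmetric extension \<open>\<sigma>\<close> of the Choi state of \<open>\<Lambda>\<close> is, up to the factor \<open>d\<close>, the Choi matrix of a
  completely positive map \<open>T : B(\<complex>\<^sup>d) \<rightarrow> B(\<complex>\<^sup>d\<^sup>' \<otimes> \<complex>\<^sup>d\<^sup>')\<close> both of whose marginals are \<open>\<Lambda>\<close>.
  \<open>ext_kernel\<close> is the kernel of \<open>T\<close>, \<open>ext_pow_kernel\<close> that of \<open>T\<^sup>\<otimes>\<^sup>n\<close>, with the output indices of the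
  two copies of \<open>(\<complex>\<^sup>d\<^sup>')\<^sup>\<otimes>\<^sup>n\<close> grouped as \<open>(B1, B1')\<close> in rows and \<open>(B2, B2')\<close> in columns.\<close>

definition ext_kernel ::
  "complex mat \<Rightarrow> nat \<Rightarrow> nat \<Rightarrow> nat \<Rightarrow> nat \<Rightarrow> nat \<Rightarrow> nat \<Rightarrow> nat \<Rightarrow> nat \<Rightarrow> complex" where
  "ext_kernel \<sigma> d d' i j b b' c c' = of_nat d * \<sigma> $$ ((i * d' + b) * d' + b', (j * d' + c) * d' + c')"

primrec ext_pow_kernel ::
  "complex mat \<Rightarrow> nat \<Rightarrow> nat \<Rightarrow> nat \<Rightarrow> nat \<Rightarrow> nat \<Rightarrow> nat \<Rightarrow> nat \<Rightarrow> nat \<Rightarrow> nat \<Rightarrow> complex" where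
  "ext_pow_kernel \<sigma> d d' 0 I J B1 B1' B2 B2' = 1"
| "ext_pow_kernel \<sigma> d d' (Suc n) I J B1 B1' B2 B2' =
     ext_kernel \<sigma> d d' (I div d^n) (J div d^n) (B1 div d'^n) (B1' div d'^n) (B2 div d'^n) (B2' div d'^n)
     * ext_pow_kernel \<sigma> d d' n (I mod d^n) (J mod d^n)
         (B1 mod d'^n) (B1' mod d'^n) (B2 mod d'^n) (B2' mod d'^n)"

locale sym_ext =
  fixes d d' :: nat and \<Lambda> :: "complex mat \<Rightarrow> complex mat" and \<sigma> :: "complex mat"
  assumes d_pos: "d \<ge> 1"
    and channel: "channel d d' \<Lambda>"
    and ext_psd: "psd (d * d' * d') \<sigma>"
    and ext_swap: "\<forall>a b b' c e e'. a < d \<longrightarrow> b < d' \<longrightarrow> b' < d' \<longrightarrow> c < d \<longrightarrow> e < d' \<longrightarrow> e' < d' \<longrightarrow>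
           \<sigma> $$ ((a * d' + b) * d' + b', (c * d' + e) * d' + e')
             = \<sigma> $$ ((a * d' + b') * d' + b, (c * d' + e') * d' + e)"
    and ext_marginal: "ptrace_last (d * d') d' \<sigma> = choi d d' \<Lambda>"

lemma sym_extendible_choiE:
  assumes "sym_extendible d d' (choi d d' \<Lambda>)" "d \<ge> 1" "channel d d' \<Lambda>"
  obtains \<sigma> where "sym_ext d d' \<Lambda> \<sigma>"
  using assms unfolding sym_extendible_def density_def sym_ext_def by blast

context sym_ext
begin

lemma ext_kernel_marginal:
  assumes "i < d" "j < d" "b < d'" "c < d'"
  shows "(\<Sum>e<d'. ext_kernel \<sigma> d d' i j b e c e) = \<Lambda> (munit d i j) $$ (b,c)"
proof -
  have r: "i * d' + b < d * d'" and c: "j * d' + c < d * d'" using assms by (auto intro: pair_index_less)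
  have "(\<Sum>e<d'. ext_kernel \<sigma> d d' i j b e c e)
      = of_nat d * ptrace_last (d * d') d' \<sigma> $$ (i * d' + b, j * d' + c)"
    unfolding ext_kernel_def ptrace_last_def using r c by (simp add: sum_distrib_left)
  also have "\<dots> = \<Lambda> (munit d i j) $$ (b,c)"
    unfolding ext_marginal using choi_index[OF channel r c] assms d_pos by simp
  finally show ?thesis .
qed

lemma ext_kernel_swap:
  "i < d \<Longrightarrow> j < d \<Longrightarrow> b < d' \<Longrightarrow> b' < d' \<Longrightarrow> c < d' \<Longrightarrow> c' < d' \<Longrightarrow>
    ext_kernel \<sigma> d d' i j b b' c c' = ext_kernel \<sigma> d d' i j b' b c' c"
  unfolding ext_kernel_def using ext_swap by simp

lemma ext_pow_kernel_marginal:
  "I < d^n \<Longrightarrow> J < d^n \<Longrightarrow> B1 < d'^n \<Longrightarrow> B2 < d'^n \<Longrightarrow>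
    (\<Sum>B'<d'^n. ext_pow_kernel \<sigma> d d' n I J B1 B' B2 B') = tensor_pow_kernel \<Lambda> d d' n I J B1 B2"
proof (induction n arbitrary: I J B1 B2)
  case 0
  then show ?case by simp
next
  case (Suc n)
  let ?N = "d^n" and ?N' = "d'^n"
  have I: "I div ?N < d" "I mod ?N < ?N" and J: "J div ?N < d" "J mod ?N < ?N"
    and B1: "B1 div ?N' < d'" "B1 mod ?N' < ?N'" and B2: "B2 div ?N' < d'" "B2 mod ?N' < ?N'"
    using Suc.prems by (auto simp: less_mult_imp_div_less mod_less_of_less_mult mult.commute)
  have "(\<Sum>B'<d'^Suc n. ext_pow_kernel \<sigma> d d' (Suc n) I J B1 B' B2 B')
      = (\<Sum>e<d'. ext_kernel \<sigma> d d' (I div ?N) (J div ?N) (B1 div ?N') e (B2 div ?N') e)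
        * (\<Sum>B'<?N'. ext_pow_kernel \<sigma> d d' n (I mod ?N) (J mod ?N) (B1 mod ?N') B' (B2 mod ?N') B')"
    by (simp add: sum_lessThan_mult sum_product)
  also have "\<dots> = tensor_pow_kernel \<Lambda> d d' (Suc n) I J B1 B2"
    using ext_kernel_marginal[OF I(1) J(1) B1(1) B2(1)] Suc.IH[OF I(2) J(2) B1(2) B2(2)] by simp
  finally show ?case .
qed

lemma ext_pow_kernel_swap:
  "I < d^n \<Longrightarrow> J < d^n \<Longrightarrow> B1 < d'^n \<Longrightarrow> B1' < d'^n \<Longrightarrow> B2 < d'^n \<Longrightarrow> B2' < d'^n \<Longrightarrow>
    ext_pow_kernel \<sigma> d d' n I J B1 B1' B2 B2' = ext_pow_kernel \<sigma> d d' n I J B1' B1 B2' B2"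
proof (induction n arbitrary: I J B1 B1' B2 B2')
  case 0
  then show ?case by simp
next
  case (Suc n)
  let ?N = "d^n" and ?N' = "d'^n"
  have I: "I div ?N < d" "I mod ?N < ?N" and J: "J div ?N < d" "J mod ?N < ?N"
    and B1: "B1 div ?N' < d'" "B1 mod ?N' < ?N'" and B2: "B2 div ?N' < d'" "B2 mod ?N' < ?N'"
    and B1': "B1' div ?N' < d'" "B1' mod ?N' < ?N'" and B2': "B2' div ?N' < d'" "B2' mod ?N' < ?N'"
    using Suc.prems by (auto simp: less_mult_imp_div_less mod_less_of_less_mult mult.commute)
  show ?case
    using ext_kernel_swap[OF I(1) J(1) B1(1) B1'(1) B2(1) B2'(1)]
      Suc.IH[OF I(2) J(2) B1(2) B1'(2) B2(2) B2'(2)]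
    by simp
qed

lemma ext_pow_kernel_marginal_fst:
  assumes "I < d^n" "J < d^n" "B1' < d'^n" "B2' < d'^n"
  shows "(\<Sum>B<d'^n. ext_pow_kernel \<sigma> d d' n I J B B1' B B2') = tensor_pow_kernel \<Lambda> d d' n I J B1' B2'"
proof -
  have "(\<Sum>B<d'^n. ext_pow_kernel \<sigma> d d' n I J B B1' B B2')
      = (\<Sum>B<d'^n. ext_pow_kernel \<sigma> d d' n I J B1' B B2' B)"
    using ext_pow_kernel_swap assms by (intro sum.cong) auto
  then show ?thesis using ext_pow_kernel_marginal assms by simp
qed

lemma ext_kernel_gram:
  obtains g where "\<And>i j b b' c c'. i < d \<Longrightarrow> j < d \<Longrightarrow> b < d' \<Longrightarrow> b' < d' \<Longrightarrow> c < d' \<Longrightarrow> c' < d' \<Longrightarrow>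
    ext_kernel \<sigma> d d' i j b b' c c' = (\<Sum>m<d * d' * d'. g m i b b' * cnj (g m j c c'))"
proof -
  obtain g where g: "\<forall>r<d * d' * d'. \<forall>c<d * d' * d'. \<sigma> $$ (r,c) = (\<Sum>m<d * d' * d'. g m r * cnj (g m c))"
    using psd_kernel_gram ext_psd unfolding psd_iff_psd_kernel by blast
  have sq: "complex_of_real (sqrt (real d)) * cnj (complex_of_real (sqrt (real d))) = of_nat d"
    by (simp flip: of_real_mult)
  show ?thesis
  proof (rule that)
    fix i j b b' c c' assume "i < d" "j < d" "b < d'" "b' < d'" "c < d'" "c' < d'"
    then have "(i * d' + b) * d' + b' < d * d' * d'" "(j * d' + c) * d' + c' < d * d' * d'"
      by (auto intro!: pair_index_less)
    then have "ext_kernel \<sigma> d d' i j b b' c c'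
        = of_nat d * (\<Sum>m<d * d' * d'. g m ((i * d' + b) * d' + b') * cnj (g m ((j * d' + c) * d' + c')))"
      unfolding ext_kernel_def using g by simp
    also have "\<dots> = (\<Sum>m<d * d' * d'. (complex_of_real (sqrt (real d)) * g m ((i * d' + b) * d' + b'))
        * cnj (complex_of_real (sqrt (real d)) * g m ((j * d' + c) * d' + c')))"
      unfolding sum_distrib_left using sq by (intro sum.cong refl) (simp add: algebra_simps)
    finally show "ext_kernel \<sigma> d d' i j b b' c c' = \<dots>" .
  qed
qed

lemma ext_pow_kernel_gram:
  obtains M :: nat and G where "\<And>I J B1 B1' B2 B2'. I < d^n \<Longrightarrow> J < d^n \<Longrightarrow> B1 < d'^n \<Longrightarrow> B1' < d'^n \<Longrightarrow>
      B2 < d'^n \<Longrightarrow> B2' < d'^n \<Longrightarrow>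
      ext_pow_kernel \<sigma> d d' n I J B1 B1' B2 B2' = (\<Sum>m<M. G m I B1 B1' * cnj (G m J B2 B2'))"
proof (rule ext_kernel_gram)
  fix g assume g: "\<And>i j b b' c c'. i < d \<Longrightarrow> j < d \<Longrightarrow> b < d' \<Longrightarrow> b' < d' \<Longrightarrow> c < d' \<Longrightarrow> c' < d' \<Longrightarrow>
    ext_kernel \<sigma> d d' i j b b' c c' = (\<Sum>m<d * d' * d'. g m i b b' * cnj (g m j c c'))"
  have "\<exists>(M::nat) G. \<forall>I J B1 B1' B2 B2'. I < d^n \<longrightarrow> J < d^n \<longrightarrow> B1 < d'^n \<longrightarrow> B1' < d'^n \<longrightarrow>
      B2 < d'^n \<longrightarrow> B2' < d'^n \<longrightarrow>
      ext_pow_kernel \<sigma> d d' n I J B1 B1' B2 B2' = (\<Sum>m<M. G m I B1 B1' * cnj (G m J B2 B2'))"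
  proof (induction n)
    case 0
    show ?case by (rule exI[of _ "1::nat"], rule exI[of _ "\<lambda>m I B1 B1'. 1::complex"]) simp
  next
    case (Suc n)
    then obtain M :: nat and G where G: "\<forall>I J B1 B1' B2 B2'. I < d^n \<longrightarrow> J < d^n \<longrightarrow> B1 < d'^n \<longrightarrow>
        B1' < d'^n \<longrightarrow> B2 < d'^n \<longrightarrow> B2' < d'^n \<longrightarrow>
        ext_pow_kernel \<sigma> d d' n I J B1 B1' B2 B2' = (\<Sum>m<M. G m I B1 B1' * cnj (G m J B2 B2'))" by blast
    let ?N = "d^n" and ?N' = "d'^n"
    define G' where "G' m I B1 B1' = g (m div M) (I div ?N) (B1 div ?N') (B1' div ?N')
        * G (m mod M) (I mod ?N) (B1 mod ?N') (B1' mod ?N')" for m I B1 B1'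
    have "ext_pow_kernel \<sigma> d d' (Suc n) I J B1 B1' B2 B2'
        = (\<Sum>m<d * d' * d' * M. G' m I B1 B1' * cnj (G' m J B2 B2'))"
      if "I < d^Suc n" "J < d^Suc n" "B1 < d'^Suc n" "B1' < d'^Suc n" "B2 < d'^Suc n" "B2' < d'^Suc n"
      for I J B1 B1' B2 B2'
    proof -
      have I: "I div ?N < d" "I mod ?N < ?N" and J: "J div ?N < d" "J mod ?N < ?N"
        and B1: "B1 div ?N' < d'" "B1 mod ?N' < ?N'" and B2: "B2 div ?N' < d'" "B2 mod ?N' < ?N'"
        and B1': "B1' div ?N' < d'" "B1' mod ?N' < ?N'" and B2': "B2' div ?N' < d'" "B2' mod ?N' < ?N'"
        using that by (auto simp: less_mult_imp_div_less mod_less_of_less_mult mult.commute)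
      have "(\<Sum>m<d * d' * d' * M. G' m I B1 B1' * cnj (G' m J B2 B2'))
          = (\<Sum>m1<d * d' * d'. g m1 (I div ?N) (B1 div ?N') (B1' div ?N')
              * cnj (g m1 (J div ?N) (B2 div ?N') (B2' div ?N')))
            * (\<Sum>m2<M. G m2 (I mod ?N) (B1 mod ?N') (B1' mod ?N')
              * cnj (G m2 (J mod ?N) (B2 mod ?N') (B2' mod ?N')))"
        unfolding sum_lessThan_mult[where a="d * d' * d'" and b=M] G'_def sum_product
        by (intro sum.cong refl) (simp add: algebra_simps)
      also have "\<dots> = ext_pow_kernel \<sigma> d d' (Suc n) I J B1 B1' B2 B2'"
        using g[OF I(1) J(1) B1(1) B1'(1) B2(1) B2'(1)] G I J B1 B2 B1' B2' by simp
      finally show ?thesis by simp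
    qed
    then show ?case by blast
  qed
  then show ?thesis using that by blast
qed

text \<open>The kernels of \<open>T\<^sup>\<otimes>\<^sup>n \<circ> E\<close>, \<open>(D \<otimes> id) \<circ> T\<^sup>\<otimes>\<^sup>n \<circ> E\<close> and \<open>(D \<otimes> D) \<circ> T\<^sup>\<otimes>\<^sup>n \<circ> E\<close>, for one branch
  \<open>(E, D)\<close> of a one-way protocol.\<close>

context
  fixes n K :: nat and E D :: "complex mat \<Rightarrow> complex mat"
  assumes encoder: "cp_map K (d^n) E" and decoder: "channel (d'^n) K D"
begin

definition encoded_kernel :: "nat \<Rightarrow> nat \<Rightarrow> nat \<Rightarrow> nat \<Rightarrow> nat \<Rightarrow> nat \<Rightarrow> complex" where
  "encoded_kernel a B1 B1' a' B2 B2' =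
     (\<Sum>I<d^n. \<Sum>J<d^n. E (munit K a a') $$ (I,J) * ext_pow_kernel \<sigma> d d' n I J B1 B1' B2 B2')"

definition half_decoded_kernel :: "nat \<Rightarrow> nat \<Rightarrow> nat \<Rightarrow> nat \<Rightarrow> nat \<Rightarrow> nat \<Rightarrow> complex" where
  "half_decoded_kernel a y B1' a' z B2' =
     (\<Sum>B1<d'^n. \<Sum>B2<d'^n. encoded_kernel a B1 B1' a' B2 B2' * D (munit (d'^n) B1 B2) $$ (y,z))"

definition clone_kernel :: "nat \<Rightarrow> nat \<Rightarrow> nat \<Rightarrow> nat \<Rightarrow> nat \<Rightarrow> nat \<Rightarrow> complex" where
  "clone_kernel a y y' a' z z' =
     (\<Sum>B1'<d'^n. \<Sum>B2'<d'^n. half_decoded_kernel a y B1' a' z B2' * D (munit (d'^n) B1' B2') $$ (y',z'))"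

lemma decoder_kraus:
  obtains g where "\<And>B1 B2 y z. B1 < d'^n \<Longrightarrow> B2 < d'^n \<Longrightarrow> y < K \<Longrightarrow> z < K \<Longrightarrow>
    D (munit (d'^n) B1 B2) $$ (y,z) = (\<Sum>m<d'^n * K. g m (B1 * K + y) * cnj (g m (B2 * K + z)))"
  using cp_map_kraus decoder unfolding channel_def by blast

lemma encoded_kernel_gram:
  obtains w :: "nat \<times> nat \<Rightarrow> nat \<Rightarrow> nat \<Rightarrow> nat \<Rightarrow> complex" and W
  where "\<And>a a' B1 B1' B2 B2'. a < K \<Longrightarrow> a' < K \<Longrightarrow> B1 < d'^n \<Longrightarrow> B1' < d'^n \<Longrightarrow> B2 < d'^n \<Longrightarrow> B2' < d'^n \<Longrightarrow>
    encoded_kernel a B1 B1' a' B2 B2' = (\<Sum>\<mu>\<in>W. w \<mu> a B1 B1' * cnj (w \<mu> a' B2 B2'))"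
proof -
  obtain ge where ge: "\<And>a a' I J. a < K \<Longrightarrow> a' < K \<Longrightarrow> I < d^n \<Longrightarrow> J < d^n \<Longrightarrow>
      E (munit K a a') $$ (I,J) = (\<Sum>m<K * d^n. ge m (a * d^n + I) * cnj (ge m (a' * d^n + J)))"
    by (rule cp_map_kraus[OF encoder]) iprover
  obtain M :: nat and G where G: "\<And>I J B1 B1' B2 B2'. I < d^n \<Longrightarrow> J < d^n \<Longrightarrow> B1 < d'^n \<Longrightarrow> B1' < d'^n \<Longrightarrow>
      B2 < d'^n \<Longrightarrow> B2' < d'^n \<Longrightarrow>
      ext_pow_kernel \<sigma> d d' n I J B1 B1' B2 B2' = (\<Sum>m<M. G m I B1 B1' * cnj (G m J B2 B2'))"
    by (rule ext_pow_kernel_gram[of n]) iprover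
  show ?thesis
  proof (rule that)
    fix a a' B1 B1' B2 B2'
    assume "a < K" "a' < K" "B1 < d'^n" "B1' < d'^n" "B2 < d'^n" "B2' < d'^n"
    then have "(\<Sum>I\<in>{..<d^n}. \<Sum>J\<in>{..<d^n}. E (munit K a a') $$ (I,J)
          * ext_pow_kernel \<sigma> d d' n I J (fst (B1,B1')) (snd (B1,B1')) (fst (B2,B2')) (snd (B2,B2')))
        = (\<Sum>p\<in>{..<K * d^n} \<times> {..<M}.
          (\<Sum>I\<in>{..<d^n}. ge (fst p) (a * d^n + I) * G (snd p) I (fst (B1,B1')) (snd (B1,B1')))
          * cnj (\<Sum>J\<in>{..<d^n}. ge (fst p) (a' * d^n + J) * G (snd p) J (fst (B2,B2')) (snd (B2,B2'))))"
      by (intro gram_kernel_compose[where R="{..<K}" and Q="{..<d'^n} \<times> {..<d'^n}"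
          and A="\<lambda>a I a' J. E (munit K a a') $$ (I,J)"
          and B="\<lambda>I q J q'. ext_pow_kernel \<sigma> d d' n I J (fst q) (snd q) (fst q') (snd q')"])
        (auto simp: ge G)
    then show "encoded_kernel a B1 B1' a' B2 B2' = (\<Sum>p\<in>{..<K * d^n} \<times> {..<M}.
        (\<Sum>I<d^n. ge (fst p) (a * d^n + I) * G (snd p) I B1 B1')
        * cnj (\<Sum>J<d^n. ge (fst p) (a' * d^n + J) * G (snd p) J B2 B2'))"
      unfolding encoded_kernel_def by simp
  qed
qed

lemma half_decoded_kernel_gram:
  obtains w :: "(nat \<times> nat) \<times> nat \<Rightarrow> nat \<Rightarrow> nat \<Rightarrow> nat \<Rightarrow> complex" and W
  where "\<And>a a' y z B1' B2'. a < K \<Longrightarrow> a' < K \<Longrightarrow> y < K \<Longrightarrow> z < K \<Longrightarrow> B1' < d'^n \<Longrightarrow> B2' < d'^n \<Longrightarrow>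
    half_decoded_kernel a y B1' a' z B2' = (\<Sum>\<mu>\<in>W. w \<mu> a B1' y * cnj (w \<mu> a' B2' z))"
proof (rule encoded_kernel_gram)
  fix w :: "nat \<times> nat \<Rightarrow> nat \<Rightarrow> nat \<Rightarrow> nat \<Rightarrow> complex" and W
  assume w: "\<And>a a' B1 B1' B2 B2'. a < K \<Longrightarrow> a' < K \<Longrightarrow> B1 < d'^n \<Longrightarrow> B1' < d'^n \<Longrightarrow>
      B2 < d'^n \<Longrightarrow> B2' < d'^n \<Longrightarrow> encoded_kernel a B1 B1' a' B2 B2' = (\<Sum>\<mu>\<in>W. w \<mu> a B1 B1' * cnj (w \<mu> a' B2 B2'))"
  obtain g where g: "\<And>B1 B2 y z. B1 < d'^n \<Longrightarrow> B2 < d'^n \<Longrightarrow> y < K \<Longrightarrow> z < K \<Longrightarrow>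
      D (munit (d'^n) B1 B2) $$ (y,z) = (\<Sum>m<d'^n * K. g m (B1 * K + y) * cnj (g m (B2 * K + z)))"
    by (rule decoder_kraus) iprover
  show ?thesis
  proof (rule that)
    fix a a' y z B1' B2' assume "a < K" "a' < K" "y < K" "z < K" "B1' < d'^n" "B2' < d'^n"
    then have "(\<Sum>B1\<in>{..<d'^n}. \<Sum>B2\<in>{..<d'^n}.
          encoded_kernel (fst (a,B1')) B1 (snd (a,B1')) (fst (a',B2')) B2 (snd (a',B2'))
          * D (munit (d'^n) B1 B2) $$ (y,z))
        = (\<Sum>p\<in>W \<times> {..<d'^n * K}.
          (\<Sum>B1\<in>{..<d'^n}. w (fst p) (fst (a,B1')) B1 (snd (a,B1')) * g (snd p) (B1 * K + y))
          * cnj (\<Sum>B2\<in>{..<d'^n}. w (fst p) (fst (a',B2')) B2 (snd (a',B2')) * g (snd p) (B2 * K + z)))"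
      by (intro gram_kernel_compose[where R="{..<K} \<times> {..<d'^n}" and Q="{..<K}"
          and A="\<lambda>r B1 c B2. encoded_kernel (fst r) B1 (snd r) (fst c) B2 (snd c)"
          and B="\<lambda>B1 y B2 z. D (munit (d'^n) B1 B2) $$ (y,z)"])
        (auto simp: w g)
    then show "half_decoded_kernel a y B1' a' z B2' = (\<Sum>p\<in>W \<times> {..<d'^n * K}.
        (\<Sum>B1<d'^n. w (fst p) a B1 B1' * g (snd p) (B1 * K + y))
        * cnj (\<Sum>B2<d'^n. w (fst p) a' B2 B2' * g (snd p) (B2 * K + z)))"
      unfolding half_decoded_kernel_def by simp
  qed
qed

lemma clone_kernel_gram:
  obtains w :: "((nat \<times> nat) \<times> nat) \<times> nat \<Rightarrow> nat \<Rightarrow> nat \<Rightarrow> nat \<Rightarrow> complex" and W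
  where "\<And>a a' y z y' z'. a < K \<Longrightarrow> a' < K \<Longrightarrow> y < K \<Longrightarrow> z < K \<Longrightarrow> y' < K \<Longrightarrow> z' < K \<Longrightarrow>
    clone_kernel a y y' a' z z' = (\<Sum>\<mu>\<in>W. w \<mu> a y y' * cnj (w \<mu> a' z z'))"
proof (rule half_decoded_kernel_gram)
  fix w :: "(nat \<times> nat) \<times> nat \<Rightarrow> nat \<Rightarrow> nat \<Rightarrow> nat \<Rightarrow> complex" and W
  assume w: "\<And>a a' y z B1' B2'. a < K \<Longrightarrow> a' < K \<Longrightarrow> y < K \<Longrightarrow> z < K \<Longrightarrow> B1' < d'^n \<Longrightarrow>
      B2' < d'^n \<Longrightarrow> half_decoded_kernel a y B1' a' z B2' = (\<Sum>\<mu>\<in>W. w \<mu> a B1' y * cnj (w \<mu> a' B2' z))"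
  obtain g where g: "\<And>B1 B2 y z. B1 < d'^n \<Longrightarrow> B2 < d'^n \<Longrightarrow> y < K \<Longrightarrow> z < K \<Longrightarrow>
      D (munit (d'^n) B1 B2) $$ (y,z) = (\<Sum>m<d'^n * K. g m (B1 * K + y) * cnj (g m (B2 * K + z)))"
    by (rule decoder_kraus) iprover
  show ?thesis
  proof (rule that)
    fix a a' y z y' z' assume "a < K" "a' < K" "y < K" "z < K" "y' < K" "z' < K"
    then have "(\<Sum>B1'\<in>{..<d'^n}. \<Sum>B2'\<in>{..<d'^n}.
          half_decoded_kernel (fst (a,y)) (snd (a,y)) B1' (fst (a',z)) (snd (a',z)) B2'
          * D (munit (d'^n) B1' B2') $$ (y',z'))
        = (\<Sum>p\<in>W \<times> {..<d'^n * K}.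
          (\<Sum>B1'\<in>{..<d'^n}. w (fst p) (fst (a,y)) B1' (snd (a,y)) * g (snd p) (B1' * K + y'))
          * cnj (\<Sum>B2'\<in>{..<d'^n}. w (fst p) (fst (a',z)) B2' (snd (a',z)) * g (snd p) (B2' * K + z')))"
      by (intro gram_kernel_compose[where R="{..<K} \<times> {..<K}" and Q="{..<K}"
          and A="\<lambda>r B1' c B2'. half_decoded_kernel (fst r) (snd r) B1' (fst c) (snd c) B2'"
          and B="\<lambda>B1 y B2 z. D (munit (d'^n) B1 B2) $$ (y,z)"])
        (auto simp: w g)
    then show "clone_kernel a y y' a' z z' = (\<Sum>p\<in>W \<times> {..<d'^n * K}.
        (\<Sum>B1'<d'^n. w (fst p) a B1' y * g (snd p) (B1' * K + y'))
        * cnj (\<Sum>B2'<d'^n. w (fst p) a' B2' z * g (snd p) (B2' * K + z')))"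
      unfolding clone_kernel_def by simp
  qed
qed


lemma encoded_carrier: "a < K \<Longrightarrow> a' < K \<Longrightarrow> E (munit K a a') \<in> carrier_mat (d^n) (d^n)"
  using encoder by (rule cp_map_munit_carrier)

lemma tensor_pow_encoded_index:
  assumes "a < K" "a' < K" "B1 < d'^n" "B2 < d'^n"
  shows "tensor_pow \<Lambda> d d' n (E (munit K a a')) $$ (B1,B2) = (\<Sum>B'<d'^n. encoded_kernel a B1 B' a' B2 B')"
    and "tensor_pow \<Lambda> d d' n (E (munit K a a')) $$ (B1,B2) = (\<Sum>B<d'^n. encoded_kernel a B B1 a' B B2)"
proof -
  have expand: "tensor_pow \<Lambda> d d' n (E (munit K a a')) $$ (B1,B2)
      = (\<Sum>I<d^n. \<Sum>J<d^n. E (munit K a a') $$ (I,J) * tensor_pow_kernel \<Lambda> d d' n I J B1 B2)"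
    using tensor_pow_index[where \<Lambda>=\<Lambda> and d=d and d'=d',
        OF channel_munit_carrier[OF channel] encoded_carrier[OF assms(1,2)]]
      assms(3,4)
    by blast
  show "tensor_pow \<Lambda> d d' n (E (munit K a a')) $$ (B1,B2) = (\<Sum>B'<d'^n. encoded_kernel a B1 B' a' B2 B')"
    unfolding expand encoded_kernel_def using assms
    by (simp add: sum_distrib_left sum.swap[of _ "{..<d'^n}"] flip: ext_pow_kernel_marginal)
  show "tensor_pow \<Lambda> d d' n (E (munit K a a')) $$ (B1,B2) = (\<Sum>B<d'^n. encoded_kernel a B B1 a' B B2)"
    unfolding expand encoded_kernel_def using assms
    by (simp add: sum_distrib_left sum.swap[of _ "{..<d'^n}"] flip: ext_pow_kernel_marginal_fst)
qed

lemma decoded_index: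
  assumes "a < K" "a' < K" "y < K" "z < K"
  shows "D (tensor_pow \<Lambda> d d' n (E (munit K a a'))) $$ (y,z) = (\<Sum>B1<d'^n. \<Sum>B2<d'^n.
    tensor_pow \<Lambda> d d' n (E (munit K a a')) $$ (B1,B2) * D (munit (d'^n) B1 B2) $$ (y,z))"
  using decoder assms tensor_pow_carrier[OF encoded_carrier]
  by (intro lin_map_expand) (auto simp: channel_def cp_map_def)

lemma clone_kernel_marginal_snd:
  assumes "a < K" "a' < K" "y < K" "z < K"
  shows "(\<Sum>y'<K. clone_kernel a y y' a' z y') = D (tensor_pow \<Lambda> d d' n (E (munit K a a'))) $$ (y,z)"
proof -
  have "(\<Sum>y'<K. clone_kernel a y y' a' z y') = (\<Sum>B1'<d'^n. \<Sum>B2'<d'^n.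
      half_decoded_kernel a y B1' a' z B2' * (\<Sum>y'<K. D (munit (d'^n) B1' B2') $$ (y',y')))"
    unfolding clone_kernel_def by (simp add: sum_distrib_left sum.swap[of _ "{..<K}"])
  also have "\<dots> = (\<Sum>B'<d'^n. half_decoded_kernel a y B' a' z B')"
    by (simp add: channel_munit_trace[OF decoder] if_distrib cong: if_cong)
  also have "\<dots> = (\<Sum>B1<d'^n. \<Sum>B2<d'^n.
      (\<Sum>B'<d'^n. encoded_kernel a B1 B' a' B2 B') * D (munit (d'^n) B1 B2) $$ (y,z))"
    unfolding half_decoded_kernel_def sum_distrib_right by (rule sum_rotate3)
  also have "\<dots> = D (tensor_pow \<Lambda> d d' n (E (munit K a a'))) $$ (y,z)"
    using assms by (simp add: decoded_index tensor_pow_encoded_index(1))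
  finally show ?thesis .
qed

lemma clone_kernel_marginal_fst:
  assumes "a < K" "a' < K" "y' < K" "z' < K"
  shows "(\<Sum>y<K. clone_kernel a y y' a' y z') = D (tensor_pow \<Lambda> d d' n (E (munit K a a'))) $$ (y',z')"
proof -
  have half_trace: "(\<Sum>y<K. half_decoded_kernel a y B1' a' y B2')
      = tensor_pow \<Lambda> d d' n (E (munit K a a')) $$ (B1',B2')"
    if "B1' < d'^n" "B2' < d'^n" for B1' B2'
  proof -
    have "(\<Sum>y<K. half_decoded_kernel a y B1' a' y B2') = (\<Sum>B1<d'^n. \<Sum>B2<d'^n.
        encoded_kernel a B1 B1' a' B2 B2' * (\<Sum>y<K. D (munit (d'^n) B1 B2) $$ (y,y)))"
      unfolding half_decoded_kernel_def by (simp add: sum_distrib_left sum.swap[of _ "{..<K}"])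
    also have "\<dots> = (\<Sum>B<d'^n. encoded_kernel a B B1' a' B B2')"
      by (simp add: channel_munit_trace[OF decoder] if_distrib cong: if_cong)
    finally show ?thesis using tensor_pow_encoded_index(2) assms that by simp
  qed
  have "(\<Sum>y<K. clone_kernel a y y' a' y z') = (\<Sum>B1'<d'^n. \<Sum>B2'<d'^n.
      tensor_pow \<Lambda> d d' n (E (munit K a a')) $$ (B1',B2') * D (munit (d'^n) B1' B2') $$ (y',z'))"
    unfolding clone_kernel_def sum_rotate3[where A="{..<K}"]
    by (intro sum.cong refl) (simp add: half_trace flip: sum_distrib_right)
  also have "\<dots> = D (tensor_pow \<Lambda> d d' n (E (munit K a a'))) $$ (y',z')"
    using assms by (simp add: decoded_index)
  finally show ?thesis .
qed


lemma branch_sym_ext_kraus: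
  obtains w :: "((nat \<times> nat) \<times> nat) \<times> nat \<Rightarrow> nat \<Rightarrow> nat \<Rightarrow> nat \<Rightarrow> complex" and W
  where "sym_ext_kraus K (\<lambda>a a'. D (tensor_pow \<Lambda> d d' n (E (munit K a a')))) w W"
proof (rule clone_kernel_gram)
  fix w :: "((nat \<times> nat) \<times> nat) \<times> nat \<Rightarrow> nat \<Rightarrow> nat \<Rightarrow> nat \<Rightarrow> complex" and W
  assume w: "\<And>a a' y z y' z'. a < K \<Longrightarrow> a' < K \<Longrightarrow> y < K \<Longrightarrow> z < K \<Longrightarrow> y' < K \<Longrightarrow> z' < K \<Longrightarrow>
    clone_kernel a y y' a' z z' = (\<Sum>\<mu>\<in>W. w \<mu> a y y' * cnj (w \<mu> a' z z'))"
  show thesis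
  proof (rule that)
    show "sym_ext_kraus K (\<lambda>a a'. D (tensor_pow \<Lambda> d d' n (E (munit K a a')))) w W"
      unfolding sym_ext_kraus_def
    proof (intro conjI allI impI)
      fix a a' y z assume "a < K" "a' < K" "y < K" "z < K"
      then show "D (tensor_pow \<Lambda> d d' n (E (munit K a a'))) $$ (y,z)
          = (\<Sum>y'<K. \<Sum>\<mu>\<in>W. w \<mu> a y y' * cnj (w \<mu> a' z y'))"
        by (simp add: w flip: clone_kernel_marginal_snd)
      from \<open>a < K\<close> \<open>a' < K\<close> \<open>y < K\<close> \<open>z < K\<close>
      show "D (tensor_pow \<Lambda> d d' n (E (munit K a a'))) $$ (y,z)
          = (\<Sum>y'<K. \<Sum>\<mu>\<in>W. w \<mu> a y' y * cnj (w \<mu> a' y' z))"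
        by (simp add: w flip: clone_kernel_marginal_fst)
    qed
  qed
qed

end

lemma protocol_fid_le:
  assumes prot: "oneway_protocol d d' n K Es Ds" and K: "K \<ge> 4"
  shows "protocol_fid d d' \<Lambda> n K Es Ds \<le> 3/4"
proof -
  define \<Psi> where "\<Psi> x a a' = (Ds ! x) (tensor_pow \<Lambda> d d' n ((Es ! x) (munit K a a')))" for x a a'
  have "Re (\<Sum>i<K. \<Sum>j<K. \<Psi> x i j $$ (i,j)) \<le> 3/4 * real K * Re (\<Sum>a<K. \<Sum>y<K. \<Psi> x a a $$ (y,y))"
    if "x < length Es" for x
  proof -
    have "cp_map K (d^n) (Es ! x)" "channel (d'^n) K (Ds ! x)"
      using prot that unfolding oneway_protocol_def by auto
    then show ?thesis
      unfolding \<Psi>_def by (rule branch_sym_ext_kraus) (rule sym_ext_kraus_fid_le[OF _ K])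
  qed
  then have "protocol_fid d d' \<Lambda> n K Es Ds
      \<le> (\<Sum>x<length Es. 3/4 * real K * Re (\<Sum>a<K. \<Sum>y<K. \<Psi> x a a $$ (y,y)) / (real K)^2)"
    unfolding protocol_fid_eq[OF prot] \<Psi>_def by (intro sum_mono divide_right_mono) auto
  also have "\<dots> = 3/4 / real K * (\<Sum>x<length Es. Re (\<Sum>a<K. \<Sum>y<K. \<Psi> x a a $$ (y,y)))"
    using K by (simp only: sum_distrib_left) (intro sum.cong refl, simp add: power2_eq_square)
  also have "(\<Sum>x<length Es. Re (\<Sum>a<K. \<Sum>y<K. \<Psi> x a a $$ (y,y))) = real K"
    using arg_cong[OF protocol_trace_sum[OF channel prot], of Re] unfolding \<Psi>_def Re_sum[symmetric] by simp
  finally show ?thesis using K by simp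
qed

lemma oneway_achievable_imp_nonpos:
  assumes "oneway_achievable d d' \<Lambda> R"
  shows "R \<le> 0"
proof (rule ccontr)
  assume "\<not> R \<le> 0"
  then have R: "R > 0" by simp
  then obtain N where N: "\<forall>n\<ge>N. \<exists>K Es Ds. K \<ge> 1 \<and> log 2 (real K) \<ge> real n * (R - R/2) \<and>
      oneway_protocol d d' n K Es Ds \<and> protocol_fid d d' \<Lambda> n K Es Ds \<ge> 1 - 1/8"
    using assms unfolding oneway_achievable_def
    by (meson half_gt_zero zero_less_divide_1_iff zero_less_numeral)
  define n where "n = N + nat \<lceil>4 / R\<rceil>"
  obtain K Es Ds where K: "K \<ge> 1" and rate: "log 2 (real K) \<ge> real n * (R - R/2)"
    and prot: "oneway_protocol d d' n K Es Ds" and fid: "protocol_fid d d' \<Lambda> n K Es Ds \<ge> 1 - 1/8"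
    using N[rule_format, of n] unfolding n_def by auto
  have "real n * (R/2) \<ge> 4 / R * (R/2)"
    using R unfolding n_def by (intro mult_right_mono) linarith+
  then have "log 2 (real K) \<ge> 2" using rate R by simp
  then have "K \<ge> 4" using K by (simp add: le_log_iff)
  then show False using protocol_fid_le[OF prot] fid by simp
qed

end

theorem mainTheorem2:
  fixes d d' :: nat and \<Lambda> :: "complex mat \<Rightarrow> complex mat"
  assumes "d \<ge> 1" and "d' \<ge> 1"
    and "channel d d' \<Lambda>"
    and "sym_extendible d d' (choi d d' \<Lambda>)"
  shows "Q_oneway d d' \<Lambda> = 0"
proof -
  obtain \<sigma> where "sym_ext d d' \<Lambda> \<sigma>"
    using sym_extendible_choiE[OF assms(4,1,3)] .
  then interpret sym_ext d d' \<Lambda> \<sigma> .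
  have "{R. 0 \<le> R \<and> oneway_achievable d d' \<Lambda> R} = {0}"
    using oneway_achievable_zero[OF assms(1,3)] oneway_achievable_imp_nonpos by force
  then show ?thesis unfolding Q_oneway_def by (simp add: zero_ereal_def)
qed

end
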